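(* Assume the standing setup (with $\mathbf{u}(x,t)\in K$ for all $(x,t)\in\Omega$) and let $\bar d(x,t)=d(\mathbf{u}(x,t))$. Then there exist functions $\alpha_{ij},\beta_i,\gamma:\Omega\to\mathbb{R}$ ($1\le i,j\le n$), each locally bounded in $\Omega$, with $\gamma\ge 0$ in $\Omega$ and the matrix $\{\alpha_{ij}(x,t)\}$ locally uniformly positive definite in $\Omega$, such that $\bar d$ is a viscosity supersolution of $$\frac{\partial \bar d}{\partial t}-\sum_{i,j}\alpha_{ij}(x,t)\frac{\partial^2\bar d}{\partial x_i\partial x_j}-\sum_i\beta_i(x,t)\frac{\partial\bar d}{\partial x_i}+\gamma(x,t)\bar d\ge 0,$$ in the following sense: whenever $(\hat x,\hat t)\in\Omega$ and $\psi\in C^\infty(\Omega)$ satisfy $\psi(\hat x,\hat t)=\bar d(\hat x,\hat t)$ and $\psi\le\bar d$ in a neighborhood of $(\hat x,\hat t)$, we have $$\psi_t-\sum_{i,j}\alpha_{ij}\psi_{x_ix_j}-\sum_i\beta_i\psi_{x_i}+\gamma\psi\ge 0\quad\text{at }(\hat x,\hat t).$$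
   Context: Standing setup: $X\subseteq\mathbb{R}^n$ is open and connected, $\Omega=X\times(0,\infty)$, and $\mathbf{u}\in C^{2,1}(\Omega;\mathbb{R}^k)\cap C(\bar\Omega;\mathbb{R}^k)$ solves $$\frac{\partial\mathbf{u}}{\partial t}=D(x,t,\mathbf{u})\sum_{i,j}a_{ij}(x,t)\frac{\partial^2\mathbf{u}}{\partial x_i\partial x_j}+\sum_i M_i(x,t,\mathbf{u})\frac{\partial\mathbf{u}}{\partial x_i}+\phi(x,t,\mathbf{u})$$ in $\Omega$, where $a_{ij}$ are real-valued, $\phi$ is $\mathbb{R}^k$-valued, and $D(x,t,z)$, $M_i(x,t,z)$ are $k\times k$ real matrices. Assumptions: $\phi,D,M_i$ are Lipschitz in $z$ uniformly for $(x,t)$ in compact subsets of $\Omega$; each $a_{ij}$ is locally bounded in $\Omega$; $D$ and each $M_i$ are locally bounded in $\Omega\times\mathbb{R}^k$; $\{a_{ij}(x,t)\}$ is symmetric and locally uniformly positive definite in $\Omega$; $D(x,t,z)$ is locally uniformly positive definite in $\Omega\times\mathbb{R}^k$. $K\subseteq\mathbb{R}^k$ is a closed convex set with $K\ne\mathbb{R}^k$, compatible with $\phi,D,M_i$: for all $(x,t)\in\Omega$, all $v\in\partial K$ and every vector $\nu$ inward pointing at $v$, $\phi(x,t,v)\cdot\nu\ge0$ and $\nu$ is a left eigenvector of $D(x,t,v)$ and of each $M_i(x,t,v)$. Definitions: for $v\in\partial K$, a supporting affine functional of $K$ at $v$ is an affine $\ell:K\to\mathbb{R}$ with $\ell\ge0$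 on $K$, $\ell(v)=0$, $|\nabla\ell|=1$. A vector $\nu$ is inward pointing at $v\in\partial K$ if $\nu=\nabla\ell$ for some supporting affine functional $\ell$ of $K$ at $v$. For $z\in K$, $d(z)=\inf\{|z-v|:v\in\partial K\}$. *)

theory Defs
  imports "HOL-Analysis.Analysis"
begin

text \<open>Points of \<Omega> are pairs (x,t) :: real^'n \<times> real.\<close>

definition e_x :: "'n::finite \<Rightarrow> (real^'n) \<times> real" where
  "e_x i = (axis i 1, 0)"

definition e_t :: "(real^'n::finite) \<times> real" where
  "e_t = (0, 1)"

definition C21_on ::
  "((real^'n::finite) \<times> real) set \<Rightarrow> ((real^'n) \<times> real \<Rightarrow> real^'k::finite)
   \<Rightarrow> ((real^'n) \<times> real \<Rightarrow> real^'k) \<Rightarrow> ('n \<Rightarrow> (real^'n) \<times> real \<Rightarrow> real^'k)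
   \<Rightarrow> ('n \<Rightarrow> 'n \<Rightarrow> (real^'n) \<times> real \<Rightarrow> real^'k) \<Rightarrow> bool" where
  "C21_on S u ut ux uxx \<longleftrightarrow>
     (\<forall>p\<in>S. ((\<lambda>h. u (p + h *\<^sub>R e_t)) has_vector_derivative ut p) (at 0)) \<and>
     (\<forall>p\<in>S. \<forall>i. ((\<lambda>h. u (p + h *\<^sub>R e_x i)) has_vector_derivative ux i p) (at 0)) \<and>
     (\<forall>p\<in>S. \<forall>i j. ((\<lambda>h. ux i (p + h *\<^sub>R e_x j)) has_vector_derivative uxx i j p) (at 0)) \<and>
     continuous_on S u \<and> continuous_on S ut \<and> (\<forall>i. continuous_on S (ux i)) \<and>
     (\<forall>i j. continuous_on S (uxx i j))"

definition pd :: "'a::euclidean_space \<Rightarrow> ('a \<Rightarrow> real) \<Rightarrow> 'a \<Rightarrow> real" where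
  "pd v f p = frechet_derivative f (at p) v"

fun iter_pd :: "'a::euclidean_space list \<Rightarrow> ('a \<Rightarrow> real) \<Rightarrow> 'a \<Rightarrow> real" where
  "iter_pd [] f = f"
| "iter_pd (v # vs) f = pd v (iter_pd vs f)"

definition C_inf_on :: "'a::euclidean_space set \<Rightarrow> ('a \<Rightarrow> real) \<Rightarrow> bool" where
  "C_inf_on S f \<longleftrightarrow>
     (\<forall>vs. (\<forall>p\<in>S. iter_pd vs f differentiable (at p)) \<and> continuous_on S (iter_pd vs f))"

definition locally_bounded_on :: "'a::metric_space set \<Rightarrow> ('a \<Rightarrow> 'b::real_normed_vector) \<Rightarrow> bool" where
  "locally_bounded_on S f \<longleftrightarrow>
     (\<forall>q\<in>S. \<exists>e>0. \<exists>B. \<forall>q'\<in>S \<inter> ball q e. norm (f q') \<le> B)"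

definition loc_unif_pos_def :: "'a::metric_space set \<Rightarrow> ('a \<Rightarrow> real^'k^'k::finite) \<Rightarrow> bool" where
  "loc_unif_pos_def S A \<longleftrightarrow>
     (\<forall>q\<in>S. \<exists>e>0. \<exists>c>0. \<forall>q'\<in>S \<inter> ball q e. \<forall>\<xi>. \<xi> \<bullet> (A q' *v \<xi>) \<ge> c * (norm \<xi>)\<^sup>2)"

definition lipschitz_z_on :: "'a::metric_space set \<Rightarrow> ('a \<Rightarrow> 'z::metric_space \<Rightarrow> 'b::real_normed_vector) \<Rightarrow> bool" where
  "lipschitz_z_on S F \<longleftrightarrow>
     (\<forall>C. compact C \<and> C \<subseteq> S \<longrightarrow> (\<exists>L. \<forall>p\<in>C. \<forall>z w. norm (F p z - F p w) \<le> L * dist z w))"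

definition supporting_affine :: "(real^'k::finite) set \<Rightarrow> real^'k \<Rightarrow> (real^'k \<Rightarrow> real) \<Rightarrow> bool" where
  "supporting_affine K v l \<longleftrightarrow> v \<in> frontier K \<and>
     (\<exists>\<nu> c. (\<forall>z. l z = \<nu> \<bullet> z + c) \<and> norm \<nu> = 1) \<and>
     (\<forall>z\<in>K. l z \<ge> 0) \<and> l v = 0"

definition inward_pointing :: "(real^'k::finite) set \<Rightarrow> real^'k \<Rightarrow> real^'k \<Rightarrow> bool" where
  "inward_pointing K v \<nu> \<longleftrightarrow> (\<exists>l. supporting_affine K v l \<and> (\<forall>z. l z = \<nu> \<bullet> z + l 0))"

definition left_eigenvector :: "real^'k::finite \<Rightarrow> real^'k^'k \<Rightarrow> bool" where
  "left_eigenvector \<nu> A \<longleftrightarrow> \<nu> \<noteq> 0 \<and> (\<exists>lam. \<nu> v* A = lam *\<^sub>R \<nu>)"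

definition dist_bd :: "(real^'k::finite) set \<Rightarrow> real^'k \<Rightarrow> real" where
  "dist_bd K z = infdist z (frontier K)"

end

theory Submission
  imports Defs
begin

text \<open>
  If a smooth \<psi> touches
  d(u) from below at p0, let v be the nearest frontier point of u(p0) and \<nu> the unit normal of a
  supporting hyperplane at v.  Then \<nu> \<bullet> (y - v) dominates d on K with equality at u(p0), so
  \<nu> \<bullet> u - \<psi> has a local minimum at p0.  The first- and second-order conditions there, the
  nonnegativity of the Frobenius product of positive semidefinite matrices, the eigenvector relations
  for D and M at v, the sign of \<phi> \<bullet> \<nu>, and a Lipschitz estimate for replacing u(p0) by v give the
  inequality with \<alpha>_ij = \<lambda> a_ij, \<beta>_i = \<mu>_i and \<gamma> a Lipschitz constant of the right-hand side.
\<close>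

lemma x_direction_expansion:
  fixes v :: "real^'n::finite"
  shows "(v, 0::real) = (\<Sum>i\<in>UNIV. v$i *\<^sub>R e_x i)"
proof -
  have "(\<Sum>i\<in>UNIV. v$i *\<^sub>R e_x i) = (\<Sum>i\<in>UNIV. v$i *\<^sub>R axis i 1, 0::real)"
    by (simp add: e_x_def sum_prod)
  also have "(\<Sum>i\<in>UNIV. v$i *\<^sub>R axis i (1::real)) = v"
  proof -
    have "(\<Sum>i\<in>UNIV. v$i * axis i 1 $ k) = (\<Sum>i\<in>UNIV. if i = k then v$k else 0)" for k :: 'n
      by (rule sum.cong) (auto simp: axis_def)
    then show ?thesis by (simp add: vec_eq_iff)
  qed
  finally show ?thesis by simp
qed

lemma has_vector_derivative_at_shift:
  fixes g :: "real \<Rightarrow> 'b::real_normed_vector"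
  assumes "((\<lambda>h. g (y + h)) has_vector_derivative g') (at 0)"
  shows "(g has_vector_derivative g') (at y)"
proof -
  have "((\<lambda>h. g (y + h)) \<circ> (\<lambda>s. s - y) has_vector_derivative (1 *\<^sub>R g')) (at y)"
    by (rule vector_diff_chain_at) (auto intro!: derivative_eq_intros assms)
  then show ?thesis by (simp add: o_def)
qed

lemma translate_mem_ball:
  fixes p w :: "'a::real_normed_vector"
  shows "norm w < r \<Longrightarrow> p + w \<in> ball p r"
  unfolding mem_ball dist_commute[of p] dist_norm by simp

lemma plane_in_open_set:
  fixes p d e :: "'a::real_normed_vector"
  assumes "open S" "p \<in> S"
  obtains \<rho> where "\<rho> > 0" "\<And>x y. \<bar>x\<bar> < \<rho> \<Longrightarrow> \<bar>y\<bar> < \<rho> \<Longrightarrow> p + x *\<^sub>R d + y *\<^sub>R e \<in> S"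
proof -
  obtain r where r: "r > 0" "ball p r \<subseteq> S" using assms openE by blast
  define \<rho> where "\<rho> = r / (norm d + norm e + 1)"
  have pos: "norm d + norm e + 1 > 0" by (simp add: add_nonneg_pos)
  have \<rho>: "\<rho> > 0" using r pos by (simp add: \<rho>_def)
  have "p + x *\<^sub>R d + y *\<^sub>R e \<in> S" if "\<bar>x\<bar> < \<rho>" "\<bar>y\<bar> < \<rho>" for x y
  proof -
    have "norm (x *\<^sub>R d + y *\<^sub>R e) \<le> \<bar>x\<bar> * norm d + \<bar>y\<bar> * norm e"
      by (rule order_trans[OF norm_triangle_ineq]) simp
    also have "\<dots> \<le> \<rho> * norm d + \<rho> * norm e"
      using that by (intro add_mono mult_right_mono) auto
    also have "\<dots> < \<rho> * (norm d + norm e + 1)" using \<rho> by (simp add: algebra_simps)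
    also have "\<dots> = r" using pos by (simp add: \<rho>_def)
    finally have "p + (x *\<^sub>R d + y *\<^sub>R e) \<in> ball p r" by (rule translate_mem_ball)
    then show ?thesis using r(2) by (auto simp: add.assoc)
  qed
  then show ?thesis using that \<rho> by blast
qed

lemma line_in_open_set:
  fixes p d :: "'a::real_normed_vector"
  assumes "open S" "p \<in> S"
  obtains \<delta> where "\<delta> > 0" "\<And>s. \<bar>s\<bar> < \<delta> \<Longrightarrow> p + s *\<^sub>R d \<in> S"
proof -
  obtain \<rho> where \<rho>: "\<rho> > 0" "\<And>x y. \<bar>x\<bar> < \<rho> \<Longrightarrow> \<bar>y\<bar> < \<rho> \<Longrightarrow> p + x *\<^sub>R d + y *\<^sub>R 0 \<in> S"
    using plane_in_open_set[OF assms] by blast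
  have "p + s *\<^sub>R d \<in> S" if "\<bar>s\<bar> < \<rho>" for s using \<rho>(2)[of s 0] \<rho>(1) that by simp
  then show ?thesis using that \<rho>(1) by blast
qed

lemma local_min_directional_derivative:
  fixes w :: "'a::real_normed_vector \<Rightarrow> real"
  assumes "open S" "p \<in> S" and min: "\<And>q. q \<in> S \<Longrightarrow> w p \<le> w q"
    and deriv: "((\<lambda>s. w (p + s *\<^sub>R d)) has_vector_derivative c) (at 0)"
  shows "c = 0"
proof -
  obtain \<delta> where \<delta>: "\<delta> > 0" "\<And>s. \<bar>s\<bar> < \<delta> \<Longrightarrow> p + s *\<^sub>R d \<in> S"
    using line_in_open_set[OF assms(1,2)] by blast
  have "\<forall>s. \<bar>0 - s\<bar> < \<delta> \<longrightarrow> w (p + 0 *\<^sub>R d) \<le> w (p + s *\<^sub>R d)"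
    using \<delta>(2) min by simp
  moreover have "((\<lambda>s. w (p + s *\<^sub>R d)) has_real_derivative c) (at 0)"
    using deriv by (simp add: has_real_derivative_iff_has_vector_derivative)
  ultimately show ?thesis using DERIV_local_min \<delta>(1) by blast
qed

lemma local_min_second_derivative_nonneg:
  fixes g g' :: "real \<Rightarrow> real"
  assumes \<delta>: "\<delta> > 0"
    and dg: "\<And>s. \<bar>s\<bar> < \<delta> \<Longrightarrow> (g has_real_derivative g' s) (at s)"
    and dg': "(g' has_real_derivative c) (at 0)"
    and g'0: "g' 0 = 0"
    and min: "\<And>s. \<bar>s\<bar> < \<delta> \<Longrightarrow> g 0 \<le> g s"
  shows "c \<ge> 0"
proof (rule ccontr)
  assume "\<not> c \<ge> 0"
  then obtain d where d: "d > 0" "\<And>h. h > 0 \<Longrightarrow> h < d \<Longrightarrow> g' h < 0"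
    using DERIV_neg_dec_right[OF dg'] g'0 by (metis add_0 not_le)
  define s where "s = min d \<delta> / 2"
  have s: "0 < s" "s < d" "s < \<delta>" using d \<delta> by (auto simp: s_def)
  obtain z where z: "0 < z" "z < s" "g s - g 0 = (s - 0) * g' z"
    using MVT2[of 0 s g g'] s dg by force
  have "s * g' z < 0" using d(2)[of z] z s by (simp add: mult_pos_neg)
  then show False using z min[of s] s by simp
qed

lemma derivative_in_plane_from_partials:
  fixes F :: "'a::real_normed_vector \<Rightarrow> 'b::real_normed_vector"
  assumes S: "open S" "p \<in> S"
    and along_d: "((\<lambda>s. F (p + s *\<^sub>R d)) has_vector_derivative A) (at 0)"
    and along_e: "\<And>q. q \<in> S \<Longrightarrow> ((\<lambda>h. F (q + h *\<^sub>R e)) has_vector_derivative G q) (at 0)"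
    and G_cont: "continuous_on S G"
  shows "((\<lambda>(x, y). F (p + x *\<^sub>R d + y *\<^sub>R e)) has_derivative (\<lambda>(tx, ty). tx *\<^sub>R A + ty *\<^sub>R G p)) (at (0, 0))"
proof -
  obtain \<rho> where \<rho>: "\<rho> > 0" "\<And>x y. \<bar>x\<bar> < \<rho> \<Longrightarrow> \<bar>y\<bar> < \<rho> \<Longrightarrow> p + x *\<^sub>R d + y *\<^sub>R e \<in> S"
    using plane_in_open_set[OF S] by blast
  define X where "X = ball (0::real) \<rho>"
  have X: "(0::real) \<in> X" "convex X" "open X" using \<rho> by (auto simp: X_def)
  have fx: "((\<lambda>x. F (p + x *\<^sub>R d + 0 *\<^sub>R e)) has_derivative (\<lambda>t. t *\<^sub>R A)) (at 0 within X)"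
    using along_d unfolding has_vector_derivative_def by (auto intro: has_derivative_at_withinI)
  have fy: "((\<lambda>y. F (p + x *\<^sub>R d + y *\<^sub>R e)) has_derivative blinfun_scaleR_left (G (p + x *\<^sub>R d + y *\<^sub>R e)))
      (at y within X)" if "x \<in> X" "y \<in> X" for x y
  proof -
    have "((\<lambda>h. F (p + x *\<^sub>R d + (y + h) *\<^sub>R e)) has_vector_derivative G (p + x *\<^sub>R d + y *\<^sub>R e)) (at 0)"
      using along_e[OF \<rho>(2)] that by (simp add: X_def scaleR_add_left add.assoc)
    then show ?thesis using has_vector_derivative_at_shift[of "\<lambda>y. F (p + x *\<^sub>R d + y *\<^sub>R e)"]
      unfolding has_vector_derivative_def by (auto intro: has_derivative_at_withinI)
  qed
  have fy_cont: "continuous (at (0, 0) within X \<times> X)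
      (\<lambda>(x, y). blinfun_scaleR_left (G (p + x *\<^sub>R d + y *\<^sub>R e)))"
  proof -
    have plane: "isCont (\<lambda>z::real \<times> real. p + fst z *\<^sub>R d + snd z *\<^sub>R e) (0, 0)"
      by (intro continuous_intros)
    have "isCont G p" using G_cont S by (simp add: continuous_on_eq_continuous_at)
    then have "isCont G ((\<lambda>z::real \<times> real. p + fst z *\<^sub>R d + snd z *\<^sub>R e) (0, 0))" by simp
    from continuous_at_compose[OF plane this]
    have "isCont (\<lambda>z. G (p + fst z *\<^sub>R d + snd z *\<^sub>R e)) (0::real, 0::real)" by (simp add: o_def)
    then have "isCont (\<lambda>z. blinfun_scaleR_left (G (p + fst z *\<^sub>R d + snd z *\<^sub>R e))) (0::real, 0::real)"
      by (rule isCont_o2[OF _ linear_continuous_at[OF bounded_linear_blinfun_scaleR_left]])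
    then show ?thesis by (simp add: split_def continuous_at_imp_continuous_within)
  qed
  have "((\<lambda>(x, y). F (p + x *\<^sub>R d + y *\<^sub>R e)) has_derivative (\<lambda>(tx, ty). tx *\<^sub>R A + ty *\<^sub>R G p))
      (at (0, 0) within X \<times> X)"
    using has_derivative_partialsI[OF fx fy fy_cont X(1,2)] by simp
  moreover have "at (0, 0) within X \<times> X = at (0::real, 0::real)"
    using X by (intro at_within_open) (auto simp: open_Times)
  ultimately show ?thesis by simp
qed

text \<open>Restricting that total derivative to the diagonal adds one direction to a directional
  derivative.\<close>

lemma directional_derivative_add_direction:
  fixes F :: "'a::real_normed_vector \<Rightarrow> 'b::real_normed_vector"
  assumes S: "open S" "p \<in> S"
    and along_d: "((\<lambda>s. F (p + s *\<^sub>R d)) has_vector_derivative A) (at 0)"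
    and along_e: "\<And>q. q \<in> S \<Longrightarrow> ((\<lambda>h. F (q + h *\<^sub>R e)) has_vector_derivative G q) (at 0)"
    and G_cont: "continuous_on S G"
  shows "((\<lambda>s. F (p + s *\<^sub>R (d + c *\<^sub>R e))) has_vector_derivative A + c *\<^sub>R G p) (at 0)"
proof -
  have diag: "((\<lambda>s. (s, c * s)) has_derivative (\<lambda>h. (h, c * h))) (at (0::real))"
    by (auto intro!: derivative_eq_intros)
  have "((\<lambda>(x, y). F (p + x *\<^sub>R d + y *\<^sub>R e)) has_derivative (\<lambda>(tx, ty). tx *\<^sub>R A + ty *\<^sub>R G p))
      (at ((\<lambda>s. (s, c * s)) 0))"
    using derivative_in_plane_from_partials[OF assms] by simp
  from has_derivative_compose[OF diag this]
  show ?thesis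
    by (simp add: has_vector_derivative_def scaleR_add_right add.assoc mult.commute)
qed

lemma directional_derivative_from_partials:
  fixes F :: "'a::real_normed_vector \<Rightarrow> 'b::real_normed_vector" and E :: "'i \<Rightarrow> 'a"
  assumes S: "open S" "p \<in> S" and T: "finite T"
    and partial: "\<And>q i. q \<in> S \<Longrightarrow> ((\<lambda>h. F (q + h *\<^sub>R E i)) has_vector_derivative DF i q) (at 0)"
    and partial_cont: "\<And>i. continuous_on S (DF i)"
  shows "((\<lambda>s. F (p + s *\<^sub>R (\<Sum>i\<in>T. c i *\<^sub>R E i))) has_vector_derivative (\<Sum>i\<in>T. c i *\<^sub>R DF i p)) (at 0)"
  using T
proof (induction T rule: finite_induct)
  case empty
  show ?case by (simp add: has_vector_derivative_const)
next
  case (insert k T)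
  have "((\<lambda>s. F (p + s *\<^sub>R ((\<Sum>i\<in>T. c i *\<^sub>R E i) + c k *\<^sub>R E k)))
      has_vector_derivative (\<Sum>i\<in>T. c i *\<^sub>R DF i p) + c k *\<^sub>R DF k p) (at 0)"
    by (rule directional_derivative_add_direction[OF S insert.IH partial partial_cont])
  then show ?case using insert.hyps by (simp add: add.commute)
qed

lemma x_directional_derivative:
  fixes F :: "(real^'n::finite) \<times> real \<Rightarrow> 'b::real_normed_vector"
  assumes S: "open S" "q \<in> S"
    and partial: "\<And>q i. q \<in> S \<Longrightarrow> ((\<lambda>h. F (q + h *\<^sub>R e_x i)) has_vector_derivative DF i q) (at 0)"
    and partial_cont: "\<And>i. continuous_on S (DF i)"
  shows "((\<lambda>h. F (q + h *\<^sub>R (v, 0))) has_vector_derivative (\<Sum>i\<in>UNIV. v$i *\<^sub>R DF i q)) (at 0)"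
  unfolding x_direction_expansion
  by (rule directional_derivative_from_partials[OF S _ partial partial_cont]) simp

lemma local_min_x_hessian_psd:
  fixes w :: "(real^'n::finite) \<times> real \<Rightarrow> real"
  assumes S: "open S" "p \<in> S"
    and min: "\<And>q. q \<in> S \<Longrightarrow> w p \<le> w q"
    and dw: "\<And>q i. q \<in> S \<Longrightarrow> ((\<lambda>h. w (q + h *\<^sub>R e_x i)) has_vector_derivative W1 i q) (at 0)"
    and W1_cont: "\<And>i. continuous_on S (W1 i)"
    and dW1: "\<And>q i j. q \<in> S \<Longrightarrow> ((\<lambda>h. W1 i (q + h *\<^sub>R e_x j)) has_vector_derivative W2 i j q) (at 0)"
    and W2_cont: "\<And>i j. continuous_on S (W2 i j)"
  shows "0 \<le> (\<Sum>i\<in>UNIV. \<Sum>j\<in>UNIV. v$i * v$j * W2 i j p)"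
proof -
  obtain \<delta> where \<delta>: "\<delta> > 0" "\<And>s. \<bar>s\<bar> < \<delta> \<Longrightarrow> p + s *\<^sub>R (v, 0) \<in> S"
    using line_in_open_set[OF S] by blast
  define g where "g s = w (p + s *\<^sub>R (v, 0))" for s
  define g' where "g' s = (\<Sum>i\<in>UNIV. v$i * W1 i (p + s *\<^sub>R (v, 0)))" for s
  have dg: "(g has_real_derivative g' s) (at s)" if "\<bar>s\<bar> < \<delta>" for s
  proof -
    have "((\<lambda>h. g (s + h)) has_vector_derivative g' s) (at 0)"
      using x_directional_derivative[OF S(1) \<delta>(2)[OF that] dw W1_cont, of v]
      by (simp add: g_def g'_def scaleR_add_left add.assoc)
    then show ?thesis
      using has_vector_derivative_at_shift by (simp add: has_real_derivative_iff_has_vector_derivative)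
  qed
  have dg': "(g' has_real_derivative (\<Sum>i\<in>UNIV. v$i * (\<Sum>j\<in>UNIV. v$j * W2 i j p))) (at 0)"
    unfolding g'_def
  proof (intro DERIV_sum DERIV_cmult)
    show "((\<lambda>h. W1 i (p + h *\<^sub>R (v, 0))) has_real_derivative (\<Sum>j\<in>UNIV. v$j * W2 i j p)) (at 0)" for i
      using x_directional_derivative[OF S dW1 W2_cont, of i v]
      by (simp add: has_real_derivative_iff_has_vector_derivative)
  qed
  have W1_zero: "W1 i p = 0" for i
    by (rule local_min_directional_derivative[OF S min dw[OF S(2)]])
  have "0 \<le> (\<Sum>i\<in>UNIV. v$i * (\<Sum>j\<in>UNIV. v$j * W2 i j p))"
  proof (rule local_min_second_derivative_nonneg[OF \<delta>(1) dg dg'])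
    show "g' 0 = 0" by (simp add: g'_def W1_zero zero_prod_def[symmetric])
    show "g 0 \<le> g s" if "\<bar>s\<bar> < \<delta>" for s
      using min \<delta>(2)[OF that] by (simp add: g_def zero_prod_def[symmetric])
  qed
  then show ?thesis by (simp add: sum_distrib_left mult.assoc)
qed

definition quad_form :: "('n::finite \<Rightarrow> 'n \<Rightarrow> real) \<Rightarrow> ('n \<Rightarrow> real) \<Rightarrow> real" where
  "quad_form A \<xi> = (\<Sum>i\<in>UNIV. \<Sum>j\<in>UNIV. \<xi> i * \<xi> j * A i j)"

lemma quad_form_shift:
  fixes A :: "'n::finite \<Rightarrow> 'n \<Rightarrow> real"
  assumes sym: "\<And>i j. A i j = A j i"
  shows "quad_form A (\<lambda>i. \<xi> i + t * (if i = k then 1 else 0))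
       = quad_form A \<xi> + 2 * t * (\<Sum>i\<in>UNIV. \<xi> i * A i k) + t\<^sup>2 * A k k"
proof -
  have expand: "(\<xi> i + t * (if i = k then 1 else 0)) * (\<xi> j + t * (if j = k then 1 else 0)) * A i j
     = \<xi> i * \<xi> j * A i j + t * (if j = k then \<xi> i * A i k else 0)
       + t * (if i = k then \<xi> j * A j k else 0)
       + (if i = k then (if j = k then t\<^sup>2 * A k k else 0) else 0)" for i j
    using sym[of k j] by (auto simp: algebra_simps power2_eq_square)
  have if_const: "(\<Sum>j\<in>S. if P then f j else 0) = (if P then sum f S else (0::real))" for P f S
    by simp
  have swap: "(\<Sum>i\<in>UNIV. \<Sum>j\<in>UNIV. (if i = k then \<xi> j * A j k else 0)) = (\<Sum>i\<in>UNIV. \<xi> i * A i k)"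
    by (subst sum.swap) simp
  show ?thesis
    unfolding quad_form_def expand
    by (simp add: sum.distrib sum_distrib_left[symmetric] swap if_const)
qed

lemma psd_diagonal_nonneg:
  fixes A :: "'n::finite \<Rightarrow> 'n \<Rightarrow> real"
  assumes sym: "\<And>i j. A i j = A j i" and psd: "\<And>\<xi>. quad_form A \<xi> \<ge> 0"
  shows "A k k \<ge> 0"
  using psd[of "\<lambda>i. 0 + 1 * (if i = k then 1 else 0)"] quad_form_shift[OF sym, where \<xi>="\<lambda>i. 0" and t=1 and k=k]
  by (simp add: quad_form_def)

lemma psd_zero_diagonal_column:
  fixes A :: "'n::finite \<Rightarrow> 'n \<Rightarrow> real"
  assumes sym: "\<And>i j. A i j = A j i" and psd: "\<And>\<xi>. quad_form A \<xi> \<ge> 0"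
    and diag: "A k k = 0"
  shows "A j k = 0"
proof (rule ccontr)
  assume nz: "A j k \<noteq> 0"
  define \<xi> where "\<xi> = (\<lambda>i. if i = j then 1 else (0::real))"
  have "(\<Sum>i\<in>UNIV. \<xi> i * A i k) = (\<Sum>i\<in>UNIV. if i = j then A j k else 0)"
    by (rule sum.cong) (auto simp: \<xi>_def)
  then have col: "(\<Sum>i\<in>UNIV. \<xi> i * A i k) = A j k" by simp
  define t where "t = - (quad_form A \<xi> + 1) / (2 * A j k)"
  have "quad_form A (\<lambda>i. \<xi> i + t * (if i = k then 1 else 0)) = quad_form A \<xi> + 2 * t * A j k"
    using quad_form_shift[OF sym, where \<xi>=\<xi> and t=t and k=k] diag col by simp
  also have "\<dots> = -1" using nz by (simp add: t_def field_simps)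
  finally show False using psd by (metis neg_0_le_iff_le not_one_le_zero)
qed

lemma psd_schur_complement:
  fixes A :: "'n::finite \<Rightarrow> 'n \<Rightarrow> real"
  assumes sym: "\<And>i j. A i j = A j i" and psd: "\<And>\<xi>. quad_form A \<xi> \<ge> 0"
    and pos: "A k k > 0"
  shows "quad_form (\<lambda>i j. A i j - A i k * A k j / A k k) \<xi> \<ge> 0"
proof -
  define a where "a = A k k"
  define b where "b = (\<Sum>i\<in>UNIV. \<xi> i * A i k)"
  have "quad_form (\<lambda>i j. A i j - A i k * A k j / a) \<xi>
      = quad_form A \<xi> - (\<Sum>i\<in>UNIV. \<Sum>j\<in>UNIV. (\<xi> i * A i k) * (\<xi> j * A j k)) / a"
    unfolding quad_form_def using sym
    by (simp add: algebra_simps sum_subtractf sum_divide_distrib)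
  also have "(\<Sum>i\<in>UNIV. \<Sum>j\<in>UNIV. (\<xi> i * A i k) * (\<xi> j * A j k)) = b * b"
    by (simp add: b_def sum_product)
  also have "quad_form A \<xi> - b * b / a = quad_form A \<xi> + 2 * (- b / a) * b + (- b / a)\<^sup>2 * a"
    using pos by (simp add: a_def field_simps power2_eq_square)
  also have "\<dots> = quad_form A (\<lambda>i. \<xi> i + (- b / a) * (if i = k then 1 else 0))"
    using quad_form_shift[OF sym, where \<xi>=\<xi> and t="- b / a" and k=k] by (simp add: a_def b_def)
  finally show ?thesis using psd by (simp add: a_def)
qed

lemma frobenius_schur_split:
  fixes A H :: "'n::finite \<Rightarrow> 'n \<Rightarrow> real"
  assumes sym: "\<And>i j. A i j = A j i" and pivot: "A k k \<noteq> 0"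
  shows "(\<Sum>i\<in>UNIV. \<Sum>j\<in>UNIV. A i j * H i j)
       = (\<Sum>i\<in>UNIV. \<Sum>j\<in>UNIV. (A i j - A i k * A k j / A k k) * H i j) + quad_form H (\<lambda>i. A i k) / A k k"
proof -
  have "A i j * H i j = (A i j - A i k * A k j / A k k) * H i j + (A i k * A j k * H i j) / A k k" for i j
    using pivot by (simp add: field_simps sym[of k j])
  then show ?thesis by (simp add: quad_form_def sum.distrib sum_divide_distrib)
qed

text \<open>The Frobenius product \<Sum>ij A_ij H_ij of a symmetric positive semidefinite A and a positive
  semidefinite H is nonnegative; proved by induction on the support of A, eliminating one pivot
  at a time. This turns the pointwise Hessian condition into the trace inequality.\<close>

lemma frobenius_product_psd_nonneg:
  fixes A H :: "'n::finite \<Rightarrow> 'n \<Rightarrow> real"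
  assumes "\<And>i j. A i j = A j i" "\<And>\<xi>. quad_form A \<xi> \<ge> 0"
    and psd_H: "\<And>\<xi>. quad_form H \<xi> \<ge> 0"
  shows "(\<Sum>i\<in>UNIV. \<Sum>j\<in>UNIV. A i j * H i j) \<ge> 0"
proof -
  have "(\<Sum>i\<in>UNIV. \<Sum>j\<in>UNIV. A i j * H i j) \<ge> 0"
    if "finite T" "\<And>i j. A i j = A j i" "\<And>\<xi>. quad_form A \<xi> \<ge> 0"
      "\<And>i j. i \<notin> T \<or> j \<notin> T \<Longrightarrow> A i j = 0" for T and A :: "'n \<Rightarrow> 'n \<Rightarrow> real"
    using that
  proof (induction T arbitrary: A rule: finite_induct)
    case empty
    then show ?case by simp
  next
    case (insert k T)
    note sym = insert.prems(1) and psd = insert.prems(2) and supp = insert.prems(3)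
    show ?case
    proof (cases "A k k = 0")
      case True
      have "A i j = 0" if "i \<notin> T \<or> j \<notin> T" for i j
        using that supp psd_zero_diagonal_column[OF sym psd True] sym by (metis insert_iff)
      then show ?thesis using insert.IH sym psd by blast
    next
      case False
      then have a: "A k k > 0" using psd_diagonal_nonneg[OF sym psd, of k] by simp
      define A' where "A' i j = A i j - A i k * A k j / A k k" for i j
      have "(\<Sum>i\<in>UNIV. \<Sum>j\<in>UNIV. A' i j * H i j) \<ge> 0"
      proof (rule insert.IH)
        show "A' i j = A' j i" for i j unfolding A'_def by (metis sym mult.commute)
        show "quad_form A' \<xi> \<ge> 0" for \<xi>
          unfolding A'_def by (rule psd_schur_complement[OF sym psd a])
        show "A' i j = 0" if "i \<notin> T \<or> j \<notin> T" for i j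
          using that supp a by (cases "i = k \<or> j = k") (auto simp: A'_def)
      qed
      moreover have "(\<Sum>i\<in>UNIV. \<Sum>j\<in>UNIV. A i j * H i j)
          = (\<Sum>i\<in>UNIV. \<Sum>j\<in>UNIV. A' i j * H i j) + quad_form H (\<lambda>i. A i k) / A k k"
        unfolding A'_def using a by (intro frobenius_schur_split[OF sym]) simp
      moreover have "quad_form H (\<lambda>i. A i k) / A k k \<ge> 0" using psd_H a by simp
      ultimately show ?thesis by simp
    qed
  qed
  from this[of UNIV A] assms show ?thesis by simp
qed

definition distance_support :: "(real^'k::finite) set \<Rightarrow> real^'k \<Rightarrow> real^'k \<Rightarrow> real^'k \<Rightarrow> bool" where
  "distance_support K z v \<nu> \<longleftrightarrow> v \<in> frontier K \<and> norm \<nu> = 1 \<and>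
     (\<forall>y\<in>K. dist_bd K y \<le> \<nu> \<bullet> (y - v)) \<and> \<nu> \<bullet> (z - v) = dist_bd K z \<and> dist z v = dist_bd K z"

lemma frontier_supporting_hyperplane:
  fixes K :: "(real^'k::finite) set"
  assumes convex: "convex K" and closed: "closed K" and v: "v \<in> frontier K"
  obtains a where "a \<noteq> 0" "\<And>y. y \<in> K \<Longrightarrow> a \<bullet> v \<le> a \<bullet> y"
proof -
  have vK: "v \<in> K" using v frontier_subset_closed[OF closed] by blast
  show ?thesis
  proof (cases "interior K = {}")
    case True
    obtain a b where ab: "a \<noteq> 0" "K \<subseteq> {x. a \<bullet> x = b}"
      using empty_interior_subset_hyperplane[OF convex True] by blast
    have "a \<bullet> v \<le> a \<bullet> y" if "y \<in> K" for y
    proof -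
      have "a \<bullet> y = b" "a \<bullet> v = b" using ab(2) vK that by blast+
      then show ?thesis by simp
    qed
    then show ?thesis using that ab(1) by blast
  next
    case False
    have "v \<notin> rel_interior K"
      using v rel_interior_nonempty_interior[OF False] by (simp add: frontier_def)
    then obtain a where "a \<noteq> 0" "\<And>y. y \<in> K \<Longrightarrow> a \<bullet> v \<le> a \<bullet> y"
      using supporting_hyperplane_rel_boundary[OF convex vK] by metis
    then show ?thesis using that by blast
  qed
qed

text \<open>A unit supporting functional at v dominates the distance to the frontier on K: moving from
  y against \<nu> leaves K after distance \<nu> \<bullet> (y - v), so the frontier is reached before that.\<close>

lemma dist_bd_le_supporting_functional:
  fixes K :: "(real^'k::finite) set"
  assumes unit: "norm \<nu> = 1" and supp: "\<And>y. y \<in> K \<Longrightarrow> 0 \<le> \<nu> \<bullet> (y - v)" and y: "y \<in> K"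
  shows "dist_bd K y \<le> \<nu> \<bullet> (y - v)"
proof (rule field_le_epsilon)
  fix e :: real assume e: "e > 0"
  define L where "L = \<nu> \<bullet> (y - v)"
  have L: "L \<ge> 0" using supp y by (simp add: L_def)
  define w where "w = y - (L + e) *\<^sub>R \<nu>"
  have "\<nu> \<bullet> (w - v) = - e"
    using unit by (simp add: w_def L_def inner_diff_right algebra_simps dot_square_norm)
  then have "w \<notin> K" using supp[of w] e by auto
  then have "closed_segment y w \<inter> frontier K \<noteq> {}"
    using y by (intro connected_Int_frontier) auto
  then obtain f where f: "f \<in> closed_segment y w" "f \<in> frontier K" by blast
  have "dist_bd K y \<le> dist y f" unfolding dist_bd_def by (rule infdist_le[OF f(2)])
  also have "\<dots> \<le> norm (w - y)"
    using segment_bound(1)[OF f(1)] by (simp add: dist_norm norm_minus_commute)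
  also have "\<dots> = L + e" using unit L e by (simp add: w_def)
  finally show "dist_bd K y \<le> \<nu> \<bullet> (y - v) + e" by (simp add: L_def)
qed

lemma distance_support_exists:
  fixes K :: "(real^'k::finite) set"
  assumes closed: "closed K" and convex: "convex K" and proper: "K \<noteq> UNIV" and z: "z \<in> K"
  shows "\<exists>v \<nu>. distance_support K z v \<nu>"
proof -
  have "frontier K \<noteq> {}" using frontier_not_empty[of K] proper z by blast
  then obtain v where v: "v \<in> frontier K" "dist_bd K z = dist z v"
    using infdist_attains_inf[OF frontier_closed] unfolding dist_bd_def by blast
  obtain a where a: "a \<noteq> 0" "\<And>y. y \<in> K \<Longrightarrow> a \<bullet> v \<le> a \<bullet> y"
    using frontier_supporting_hyperplane[OF convex closed v(1)] by blast
  define \<nu> where "\<nu> = a /\<^sub>R norm a"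
  have unit: "norm \<nu> = 1" using a by (simp add: \<nu>_def)
  have "0 \<le> \<nu> \<bullet> (y - v)" if "y \<in> K" for y
    using a(2)[OF that] by (simp add: \<nu>_def inner_diff_right mult_left_mono)
  then have dominates: "\<forall>y\<in>K. dist_bd K y \<le> \<nu> \<bullet> (y - v)"
    using dist_bd_le_supporting_functional[OF unit] by blast
  have "\<nu> \<bullet> (z - v) \<le> norm \<nu> * norm (z - v)" by (rule norm_cauchy_schwarz)
  then have "\<nu> \<bullet> (z - v) \<le> dist_bd K z" using unit v by (simp add: dist_norm)
  then have "\<nu> \<bullet> (z - v) = dist_bd K z" using dominates z by (simp add: order_antisym)
  then show ?thesis
    using v unit dominates unfolding distance_support_def by auto
qed

lemma distance_support_inward_pointing:
  assumes supp: "distance_support K z v \<nu>"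
  shows "inward_pointing K v \<nu>"
proof -
  define l where "l y = \<nu> \<bullet> y - \<nu> \<bullet> v" for y
  have "supporting_affine K v l"
    unfolding supporting_affine_def
  proof (intro conjI)
    show "v \<in> frontier K" using supp by (simp add: distance_support_def)
    show "\<exists>\<nu>' c. (\<forall>y. l y = \<nu>' \<bullet> y + c) \<and> norm \<nu>' = 1"
      using supp by (intro exI[of _ \<nu>] exI[of _ "- (\<nu> \<bullet> v)"]) (simp add: l_def distance_support_def)
    show "\<forall>y\<in>K. 0 \<le> l y"
    proof
      fix y assume "y \<in> K"
      then have "dist_bd K y \<le> \<nu> \<bullet> (y - v)" using supp by (simp add: distance_support_def)
      moreover have "0 \<le> dist_bd K y" unfolding dist_bd_def by (rule infdist_nonneg)
      ultimately show "0 \<le> l y" by (simp add: l_def inner_diff_right)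
    qed
    show "l v = 0" by (simp add: l_def)
  qed
  moreover have "\<forall>y. l y = \<nu> \<bullet> y + l 0" by (simp add: l_def)
  ultimately show ?thesis unfolding inward_pointing_def by blast
qed

lemma left_eigenvector_unit:
  assumes "left_eigenvector \<nu> A" and unit: "norm \<nu> = 1"
  shows "\<nu> v* A = (\<nu> \<bullet> (A *v \<nu>)) *\<^sub>R \<nu>"
proof -
  obtain l where l: "\<nu> v* A = l *\<^sub>R \<nu>" using assms(1) unfolding left_eigenvector_def by blast
  have "\<nu> \<bullet> \<nu> = 1" using unit by (simp add: dot_square_norm)
  then have "\<nu> \<bullet> (A *v \<nu>) = l" using l by (simp add: dot_lmul_matrix[symmetric])
  then show ?thesis using l by simp
qed

lemma compact_bound_from_local:
  fixes S :: "'a::metric_space set"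
  assumes C: "compact C" "C \<subseteq> S"
    and loc: "\<And>q. q \<in> S \<Longrightarrow> \<exists>e>0. \<exists>B::real. \<forall>q'\<in>S \<inter> ball q e. P B q'"
    and mono: "\<And>B B' x. P B x \<Longrightarrow> B \<le> B' \<Longrightarrow> P B' x"
  shows "\<exists>B. \<forall>x\<in>C. P B x"
proof -
  obtain E Bf where EB: "\<And>q. q \<in> S \<Longrightarrow> E q > 0 \<and> (\<forall>q'\<in>S \<inter> ball q (E q). P (Bf q) q')"
    using loc by metis
  have cover: "C \<subseteq> (\<Union>q\<in>C. ball q (E q))" using EB C(2) by force
  obtain F where F: "F \<subseteq> C" "finite F" "C \<subseteq> (\<Union>q\<in>F. ball q (E q))"
    using compactE_image[OF C(1) _ cover] by blast
  define B where "B = (\<Sum>q\<in>F. \<bar>Bf q\<bar>)"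
  have "P B x" if x: "x \<in> C" for x
  proof -
    obtain q where q: "q \<in> F" "x \<in> ball q (E q)" using F(3) x by blast
    then have "P (Bf q) x" using EB F C x by blast
    moreover have "Bf q \<le> B"
      unfolding B_def using q F(2) member_le_sum[of q F "\<lambda>q. \<bar>Bf q\<bar>"] by simp
    ultimately show ?thesis by (rule mono)
  qed
  then show ?thesis by blast
qed

lemma local_from_compact_bound:
  fixes S :: "'a::heine_borel set"
  assumes "open S" "q \<in> S" and compact: "\<And>C. compact C \<Longrightarrow> C \<subseteq> S \<Longrightarrow> \<exists>B. \<forall>x\<in>C. P B x"
  shows "\<exists>e>0. \<exists>B. \<forall>q'\<in>S \<inter> ball q e. P B q'"
proof -
  obtain r where r: "r > 0" "cball q r \<subseteq> S" using assms(1,2) open_contains_cball by blast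
  then obtain B where B: "\<forall>x\<in>cball q r. P B x" using compact[of "cball q r"] by auto
  have "\<forall>q'\<in>S \<inter> ball q r. P B q'" using B by auto
  then show ?thesis using r(1) by blast
qed

lemma locally_bounded_on_compact:
  assumes "locally_bounded_on S f" "compact C" "C \<subseteq> S"
  shows "\<exists>B. \<forall>x\<in>C. norm (f x) \<le> B"
  using assms unfolding locally_bounded_on_def
  by (intro compact_bound_from_local[where P="\<lambda>B x. norm (f x) \<le> B"]) auto

lemma locally_bounded_onI_compact:
  fixes S :: "'a::heine_borel set"
  assumes "open S" "\<And>C. compact C \<Longrightarrow> C \<subseteq> S \<Longrightarrow> \<exists>B. \<forall>x\<in>C. norm (f x) \<le> B"
  shows "locally_bounded_on S f"
  unfolding locally_bounded_on_def
proof
  fix q assume "q \<in> S"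
  show "\<exists>e>0. \<exists>B. \<forall>q'\<in>S \<inter> ball q e. norm (f q') \<le> B"
    by (rule local_from_compact_bound[OF assms(1) \<open>q \<in> S\<close> assms(2)])
qed

lemma loc_unif_pos_compact:
  fixes A :: "'a::metric_space \<Rightarrow> real^'k::finite^'k"
  assumes pos: "loc_unif_pos_def S A" and C: "compact C" "C \<subseteq> S"
  shows "\<exists>c>0. \<forall>x\<in>C. \<forall>\<xi>. c * (norm \<xi>)\<^sup>2 \<le> \<xi> \<bullet> (A x *v \<xi>)"
proof -
  let ?P = "\<lambda>B x. B > 0 \<and> (\<forall>\<xi>. (norm \<xi>)\<^sup>2 \<le> B * (\<xi> \<bullet> (A x *v \<xi>)))"
  have "\<exists>B. \<forall>x\<in>C. ?P B x"
  proof (rule compact_bound_from_local[OF C])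
    fix q assume "q \<in> S"
    then obtain e c where "e > 0" "c > 0" "\<forall>q'\<in>S \<inter> ball q e. \<forall>\<xi>. c * (norm \<xi>)\<^sup>2 \<le> \<xi> \<bullet> (A q' *v \<xi>)"
      using pos unfolding loc_unif_pos_def_def by blast
    then show "\<exists>e>0. \<exists>B. \<forall>q'\<in>S \<inter> ball q e. ?P B q'"
      by (intro exI[of _ e] conjI exI[of _ "1 / c"]) (auto simp: field_simps)
  next
    fix B B' x assume P: "?P B x" and "B \<le> B'"
    have "B * (\<xi> \<bullet> (A x *v \<xi>)) \<le> B' * (\<xi> \<bullet> (A x *v \<xi>))" for \<xi>
    proof -
      have "0 \<le> B * (\<xi> \<bullet> (A x *v \<xi>))" using P order_trans[OF zero_le_power2] by blast
      then show ?thesis using P \<open>B \<le> B'\<close> by (simp add: mult_right_mono zero_le_mult_iff)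
    qed
    then show "?P B' x" using P \<open>B \<le> B'\<close> by (meson order_trans order.strict_trans2)
  qed
  then obtain B where B: "\<forall>x\<in>C. ?P B x" by blast
  show ?thesis
  proof (cases "C = {}")
    case True then show ?thesis by (intro exI[of _ 1]) auto
  next
    case False
    then have "B > 0" using B by blast
    then show ?thesis using B by (intro exI[of _ "1 / B"]) (auto simp: field_simps)
  qed
qed

lemma loc_unif_pos_defI_compact:
  fixes S :: "'a::heine_borel set"
  assumes "open S"
    and "\<And>C. compact C \<Longrightarrow> C \<subseteq> S \<Longrightarrow> \<exists>c>0. \<forall>x\<in>C. \<forall>\<xi>. c * (norm \<xi>)\<^sup>2 \<le> \<xi> \<bullet> (A x *v \<xi>)"
  shows "loc_unif_pos_def S A"
  unfolding loc_unif_pos_def_def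
proof
  fix q assume "q \<in> S"
  have "\<exists>e>0. \<exists>c. \<forall>q'\<in>S \<inter> ball q e. c > 0 \<and> (\<forall>\<xi>. c * (norm \<xi>)\<^sup>2 \<le> \<xi> \<bullet> (A q' *v \<xi>))"
  proof (rule local_from_compact_bound[OF assms(1) \<open>q \<in> S\<close>])
    fix C :: "'a set" assume "compact C" "C \<subseteq> S"
    then obtain c where "c > 0" "\<forall>x\<in>C. \<forall>\<xi>. c * (norm \<xi>)\<^sup>2 \<le> \<xi> \<bullet> (A x *v \<xi>)"
      using assms(2) by blast
    then show "\<exists>c. \<forall>x\<in>C. c > 0 \<and> (\<forall>\<xi>. c * (norm \<xi>)\<^sup>2 \<le> \<xi> \<bullet> (A x *v \<xi>))" by blast
  qed
  then obtain e c where "e > 0" "q \<in> S \<inter> ball q e"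
    "\<forall>q'\<in>S \<inter> ball q e. c > 0 \<and> (\<forall>\<xi>. c * (norm \<xi>)\<^sup>2 \<le> \<xi> \<bullet> (A q' *v \<xi>))"
    using \<open>q \<in> S\<close> by auto
  then show "\<exists>e>0. \<exists>c>0. \<forall>q'\<in>S \<inter> ball q e. \<forall>\<xi>. c * (norm \<xi>)\<^sup>2 \<le> \<xi> \<bullet> (A q' *v \<xi>)"
    by blast
qed

lemma continuous_on_compact_bound:
  assumes "continuous_on S f" "compact C" "C \<subseteq> S"
  shows "\<exists>B. \<forall>x\<in>C. norm (f x) \<le> B"
proof -
  have "compact (f ` C)"
    by (rule compact_continuous_image[OF continuous_on_subset[OF assms(1,3)] assms(2)])
  then have "bounded (f ` C)" by (rule compact_imp_bounded)
  then obtain B where "\<forall>y\<in>f ` C. norm y \<le> B" unfolding bounded_iff by blast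
  then show ?thesis by blast
qed

lemma finite_family_bound:
  fixes P :: "'i::finite \<Rightarrow> real \<Rightarrow> bool"
  assumes "\<And>i. \<exists>B. P i B" and mono: "\<And>i B B'. P i B \<Longrightarrow> B \<le> B' \<Longrightarrow> P i B'"
  shows "\<exists>B. \<forall>i. P i B"
proof -
  have "\<exists>Bf. \<forall>i. P i (Bf i)" using assms(1) by (intro choice) blast
  then obtain Bf where Bf: "\<And>i. P i (Bf i)" by blast
  have "P i (Max (range Bf))" for i by (rule mono[OF Bf]) simp
  then show ?thesis by blast
qed

lemma matrix_vector_norm_bound:
  fixes E :: "real^'k::finite^'m::finite"
  shows "norm (E *v x) \<le> real CARD('m) * real CARD('k) * norm E * norm x"
proof -
  have "\<bar>E $ i $ j\<bar> \<le> norm E" for i j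
    using order_trans[OF component_le_norm_cart Finite_Cartesian_Product.norm_nth_le] by blast
  then have "onorm ((*v) E) \<le> real CARD('m) * real CARD('k) * norm E"
    by (rule onorm_le_matrix_component)
  moreover have "norm (E *v x) \<le> onorm ((*v) E) * norm x"
    by (rule onorm[OF matrix_vector_mul_bounded_linear])
  ultimately show ?thesis by (meson mult_right_mono norm_ge_zero order_trans)
qed

definition lipschitz_const :: "('a::metric_space \<Rightarrow> 'b::metric_space) \<Rightarrow> real" where
  "lipschitz_const f = Inf {L. L-lipschitz_on UNIV f}"

lemma lipschitz_const:
  assumes "L-lipschitz_on UNIV f"
  shows "(lipschitz_const f)-lipschitz_on UNIV f" and "lipschitz_const f \<le> L"
proof -
  let ?S = "{L. L-lipschitz_on UNIV f}"
  have ne: "?S \<noteq> {}" using assms by blast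
  have nonneg: "\<And>L'. L' \<in> ?S \<Longrightarrow> 0 \<le> L'" by (auto dest: lipschitz_on_nonneg)
  then have "bdd_below ?S" by (meson bdd_below.I)
  then show "lipschitz_const f \<le> L"
    unfolding lipschitz_const_def using assms by (intro cInf_lower) auto
  show "(lipschitz_const f)-lipschitz_on UNIV f"
  proof (rule lipschitz_onI)
    show "0 \<le> lipschitz_const f"
      unfolding lipschitz_const_def by (rule cInf_greatest[OF ne nonneg])
    fix x y
    show "dist (f x) (f y) \<le> lipschitz_const f * dist x y"
    proof (cases "x = y")
      case False
      then have pos: "dist x y > 0" by simp
      have "dist (f x) (f y) / dist x y \<le> lipschitz_const f"
        unfolding lipschitz_const_def
        by (rule cInf_greatest[OF ne]) (use pos in \<open>auto simp: divide_le_eq dest: lipschitz_onD\<close>)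
      then show ?thesis using pos by (simp add: divide_le_eq)
    qed simp
  qed
qed

lemma C_inf_on_derivative:
  fixes f :: "'a::euclidean_space \<Rightarrow> real"
  assumes "C_inf_on S f" "q \<in> S"
  shows "((\<lambda>h. iter_pd vs f (q + h *\<^sub>R v)) has_vector_derivative iter_pd (v # vs) f q) (at 0)"
proof -
  let ?f' = "frechet_derivative (iter_pd vs f) (at q)"
  have "(iter_pd vs f has_derivative ?f') (at q)"
    using assms frechet_derivative_works unfolding C_inf_on_def by blast
  then have f': "(iter_pd vs f has_derivative ?f') (at ((\<lambda>h. q + h *\<^sub>R v) 0))" and "linear ?f'"
    using has_derivative_linear by auto
  have "((\<lambda>h. q + h *\<^sub>R v) has_derivative (\<lambda>h. h *\<^sub>R v)) (at (0::real))"
    by (auto intro!: derivative_eq_intros)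
  from has_derivative_compose[OF this f']
  have "((\<lambda>h. iter_pd vs f (q + h *\<^sub>R v)) has_derivative (\<lambda>h. ?f' (h *\<^sub>R v))) (at 0)" by simp
  then show ?thesis
    unfolding has_vector_derivative_def using linear_scale[OF \<open>linear ?f'\<close>] by (simp add: pd_def)
qed

lemma test_difference_derivative:
  fixes F :: "'a::euclidean_space \<Rightarrow> 'b::real_inner" and \<psi> :: "'a \<Rightarrow> real"
  assumes "C_inf_on S \<psi>" "q \<in> S" and "((\<lambda>h. F (q + h *\<^sub>R d)) has_vector_derivative F') (at 0)"
  shows "((\<lambda>h. \<nu> \<bullet> F (q + h *\<^sub>R d) - iter_pd vs \<psi> (q + h *\<^sub>R d))
      has_vector_derivative \<nu> \<bullet> F' - iter_pd (d # vs) \<psi> q) (at 0)"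
  using assms(3) C_inf_on_derivative[OF assms(1,2)]
  by (intro has_vector_derivative_diff bounded_linear.has_vector_derivative[OF bounded_linear_inner_right])

lemma unit_quadratic_form_bound:
  fixes A :: "real^'k::finite^'k"
  assumes "norm \<nu> = 1"
  shows "\<bar>\<nu> \<bullet> (A *v \<nu>)\<bar> \<le> real CARD('k) * real CARD('k) * norm A"
proof -
  have "\<bar>\<nu> \<bullet> (A *v \<nu>)\<bar> \<le> norm \<nu> * norm (A *v \<nu>)" by (rule Cauchy_Schwarz_ineq2)
  also have "\<dots> \<le> real CARD('k) * real CARD('k) * norm A"
    using matrix_vector_norm_bound[of A \<nu>] assms by simp
  finally show ?thesis .
qed

lemma quadratic_form_cart:
  fixes A :: "real^'n::finite^'n"
  shows "\<xi> \<bullet> (A *v \<xi>) = quad_form (\<lambda>i j. A$i$j) (\<lambda>i. \<xi>$i)"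
  by (simp add: quad_form_def inner_vec_def matrix_vector_mult_def sum_distrib_left
      mult.assoc mult.commute mult.left_commute)

lemma bounded_sum_on:
  fixes f :: "'i::finite \<Rightarrow> 'a \<Rightarrow> 'b::real_normed_vector"
  assumes "\<And>i. \<exists>B. \<forall>x\<in>C. norm (f i x) \<le> B"
  shows "\<exists>B. \<forall>x\<in>C. norm (\<Sum>i\<in>UNIV. f i x) \<le> B"
proof -
  obtain B where B: "\<forall>i. \<forall>x\<in>C. norm (f i x) \<le> B"
    using finite_family_bound[of "\<lambda>i B. \<forall>x\<in>C. norm (f i x) \<le> B"] assms by force
  have "norm (\<Sum>i\<in>UNIV. f i x) \<le> real CARD('i) * B" if "x \<in> C" for x
    using norm_sum[of "\<lambda>i. f i x" UNIV] sum_bounded_above[of UNIV "\<lambda>i. norm (f i x)" B] B that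
    by (simp add: order_trans)
  then show ?thesis by blast
qed

lemma lipschitz_matrix_term:
  fixes E :: "'z::metric_space \<Rightarrow> real^'k::finite^'m::finite"
  assumes "norm (E z - E w) \<le> L * dist z w" "norm x \<le> B"
  shows "norm (E z *v x - E w *v x) \<le> real CARD('m) * real CARD('k) * max 0 L * max 0 B * dist z w"
proof -
  have "norm (E z *v x - E w *v x) \<le> real CARD('m) * real CARD('k) * norm (E z - E w) * norm x"
    using matrix_vector_norm_bound[of "E z - E w" x] by (simp add: matrix_vector_mult_diff_rdistrib)
  also have "\<dots> \<le> real CARD('m) * real CARD('k) * (max 0 L * dist z w) * max 0 B"
  proof -
    have "norm (E z - E w) \<le> max 0 L * dist z w"
      using assms(1) mult_right_mono[OF max.cobounded2[of L 0] zero_le_dist[of z w]] by linarith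
    moreover have "norm x \<le> max 0 B" using assms(2) by linarith
    ultimately show ?thesis by (intro mult_mono mult_left_mono) auto
  qed
  finally show ?thesis by (simp add: mult_ac)
qed

lemma bounded_scaleR_on:
  fixes f :: "'a \<Rightarrow> real" and g :: "'a \<Rightarrow> 'b::real_normed_vector"
  assumes "\<exists>B. \<forall>x\<in>C. \<bar>f x\<bar> \<le> B" and "\<exists>B. \<forall>x\<in>C. norm (g x) \<le> B"
  shows "\<exists>B. \<forall>x\<in>C. norm (f x *\<^sub>R g x) \<le> B"
proof -
  obtain B1 B2 where B: "\<forall>x\<in>C. \<bar>f x\<bar> \<le> B1" "\<forall>x\<in>C. norm (g x) \<le> B2" using assms by blast
  have "norm (f x *\<^sub>R g x) \<le> max 0 B1 * max 0 B2" if "x \<in> C" for x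
    using B that by (simp add: mult_mono' max.coboundedI2)
  then show ?thesis by blast
qed

lemma uniform_lipschitz_family:
  fixes F :: "'i::finite \<Rightarrow> 'p \<Rightarrow> 'z::metric_space \<Rightarrow> 'b::real_normed_vector"
  assumes "\<And>i. \<exists>L. \<forall>p\<in>C. \<forall>z w. norm (F i p z - F i p w) \<le> L * dist z w"
  shows "\<exists>L. \<forall>i. \<forall>p\<in>C. \<forall>z w. norm (F i p z - F i p w) \<le> L * dist z w"
proof (rule finite_family_bound[OF assms])
  fix i L L' assume L: "\<forall>p\<in>C. \<forall>z w. norm (F i p z - F i p w) \<le> L * dist z w" and "L \<le> L'"
  show "\<forall>p\<in>C. \<forall>z w. norm (F i p z - F i p w) \<le> L' * dist z w"
  proof (intro ballI allI)
    fix p z w assume "p \<in> C"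
    then have "norm (F i p z - F i p w) \<le> L * dist z w" using L by blast
    also have "\<dots> \<le> L' * dist z w" using \<open>L \<le> L'\<close> by (rule mult_right_mono) simp
    finally show "norm (F i p z - F i p w) \<le> L' * dist z w" .
  qed
qed

locale diffusion_in_convex_set =
  fixes \<Omega> :: "((real^'n::finite) \<times> real) set"
    and u :: "(real^'n) \<times> real \<Rightarrow> real^'k::finite"
    and ut :: "(real^'n) \<times> real \<Rightarrow> real^'k"
    and ux :: "'n \<Rightarrow> (real^'n) \<times> real \<Rightarrow> real^'k"
    and uxx :: "'n \<Rightarrow> 'n \<Rightarrow> (real^'n) \<times> real \<Rightarrow> real^'k"
    and a :: "'n \<Rightarrow> 'n \<Rightarrow> (real^'n) \<times> real \<Rightarrow> real"
    and D :: "(real^'n) \<times> real \<Rightarrow> real^'k \<Rightarrow> real^'k^'k"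
    and M :: "'n \<Rightarrow> (real^'n) \<times> real \<Rightarrow> real^'k \<Rightarrow> real^'k^'k"
    and \<phi> :: "(real^'n) \<times> real \<Rightarrow> real^'k \<Rightarrow> real^'k"
    and K :: "(real^'k) set"
  assumes open_\<Omega>: "open \<Omega>"
    and C21: "C21_on \<Omega> u ut ux uxx"
    and pde: "\<And>p. p \<in> \<Omega> \<Longrightarrow> ut p = D p (u p) *v (\<Sum>i\<in>UNIV. \<Sum>j\<in>UNIV. a i j p *\<^sub>R uxx i j p)
                        + (\<Sum>i\<in>UNIV. M i p (u p) *v ux i p) + \<phi> p (u p)"
    and lip_\<phi>: "lipschitz_z_on \<Omega> \<phi>" and lip_D: "lipschitz_z_on \<Omega> D"
    and lip_M: "\<And>i. lipschitz_z_on \<Omega> (M i)"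
    and a_bdd: "\<And>i j. locally_bounded_on \<Omega> (a i j)"
    and D_bdd: "locally_bounded_on (\<Omega> \<times> UNIV) (\<lambda>(p, z). D p z)"
    and M_bdd: "\<And>i. locally_bounded_on (\<Omega> \<times> UNIV) (\<lambda>(p, z). M i p z)"
    and a_sym: "\<And>p i j. p \<in> \<Omega> \<Longrightarrow> a i j p = a j i p"
    and a_pos: "loc_unif_pos_def \<Omega> (\<lambda>p. \<chi> i j. a i j p)"
    and D_pos: "loc_unif_pos_def (\<Omega> \<times> UNIV) (\<lambda>(p, z). D p z)"
    and K_closed: "closed K" and K_convex: "convex K" and K_proper: "K \<noteq> UNIV"
    and compat: "\<And>p v \<nu>. p \<in> \<Omega> \<Longrightarrow> v \<in> frontier K \<Longrightarrow> inward_pointing K v \<nu> \<Longrightarrow>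
        \<phi> p v \<bullet> \<nu> \<ge> 0 \<and> left_eigenvector \<nu> (D p v) \<and> (\<forall>i. left_eigenvector \<nu> (M i p v))"
    and u_in_K: "\<And>p. p \<in> \<Omega> \<Longrightarrow> u p \<in> K"
begin

lemma
  shows u_dt: "\<And>p. p \<in> \<Omega> \<Longrightarrow> ((\<lambda>h. u (p + h *\<^sub>R e_t)) has_vector_derivative ut p) (at 0)"
    and u_dx: "\<And>p i. p \<in> \<Omega> \<Longrightarrow> ((\<lambda>h. u (p + h *\<^sub>R e_x i)) has_vector_derivative ux i p) (at 0)"
    and u_dxx: "\<And>p i j. p \<in> \<Omega> \<Longrightarrow> ((\<lambda>h. ux i (p + h *\<^sub>R e_x j)) has_vector_derivative uxx i j p) (at 0)"
    and u_cont: "continuous_on \<Omega> u"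
    and ux_cont: "\<And>i. continuous_on \<Omega> (ux i)"
    and uxx_cont: "\<And>i j. continuous_on \<Omega> (uxx i j)"
  using C21 unfolding C21_on_def by blast+

definition diffusion :: "(real^'n) \<times> real \<Rightarrow> real^'k" where
  "diffusion p = (\<Sum>i\<in>UNIV. \<Sum>j\<in>UNIV. a i j p *\<^sub>R uxx i j p)"

definition rhs :: "(real^'n) \<times> real \<Rightarrow> real^'k \<Rightarrow> real^'k" where
  "rhs p z = D p z *v diffusion p + (\<Sum>i\<in>UNIV. M i p z *v ux i p) + \<phi> p z"

lemma ut_eq_rhs: "p \<in> \<Omega> \<Longrightarrow> ut p = rhs p (u p)"
  using pde by (simp add: rhs_def diffusion_def)

definition support_pair :: "(real^'n) \<times> real \<Rightarrow> (real^'k) \<times> (real^'k)" where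
  "support_pair p = (SOME (v, \<nu>). distance_support K (u p) v \<nu>)"

definition foot :: "(real^'n) \<times> real \<Rightarrow> real^'k" where
  "foot p = fst (support_pair p)"

definition normal :: "(real^'n) \<times> real \<Rightarrow> real^'k" where
  "normal p = snd (support_pair p)"

lemma distance_support_at: "p \<in> \<Omega> \<Longrightarrow> distance_support K (u p) (foot p) (normal p)"
proof -
  assume "p \<in> \<Omega>"
  then obtain v \<nu> where "distance_support K (u p) v \<nu>"
    using distance_support_exists[OF K_closed K_convex K_proper u_in_K] by blast
  then have "\<exists>v\<nu>. case v\<nu> of (v, \<nu>) \<Rightarrow> distance_support K (u p) v \<nu>" by auto
  then have "case support_pair p of (v, \<nu>) \<Rightarrow> distance_support K (u p) v \<nu>"
    unfolding support_pair_def by (rule someI_ex)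
  then show ?thesis by (simp add: foot_def normal_def split_beta)
qed

lemma normal_unit: "p \<in> \<Omega> \<Longrightarrow> norm (normal p) = 1"
  using distance_support_at[of p] unfolding distance_support_def by blast

lemma dist_foot: "p \<in> \<Omega> \<Longrightarrow> dist (u p) (foot p) = dist_bd K (u p)"
  using distance_support_at[of p] unfolding distance_support_def by blast

definition eig_D :: "(real^'n) \<times> real \<Rightarrow> real" where
  "eig_D p = normal p \<bullet> (D p (foot p) *v normal p)"

definition eig_M :: "'n \<Rightarrow> (real^'n) \<times> real \<Rightarrow> real" where
  "eig_M i p = normal p \<bullet> (M i p (foot p) *v normal p)"

lemma compatibility_at_foot:
  assumes p: "p \<in> \<Omega>"
  shows "\<phi> p (foot p) \<bullet> normal p \<ge> 0"
    and "normal p v* D p (foot p) = eig_D p *\<^sub>R normal p"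
    and "\<And>i. normal p v* M i p (foot p) = eig_M i p *\<^sub>R normal p"
proof -
  have supp: "distance_support K (u p) (foot p) (normal p)" by (rule distance_support_at[OF p])
  then have unit: "norm (normal p) = 1" by (simp add: distance_support_def)
  have "foot p \<in> frontier K" using supp by (simp add: distance_support_def)
  from compat[OF p this distance_support_inward_pointing[OF supp]]
  have c: "\<phi> p (foot p) \<bullet> normal p \<ge> 0" "left_eigenvector (normal p) (D p (foot p))"
    "\<And>i. left_eigenvector (normal p) (M i p (foot p))" by blast+
  show "\<phi> p (foot p) \<bullet> normal p \<ge> 0" by (fact c(1))
  show "normal p v* D p (foot p) = eig_D p *\<^sub>R normal p"
    unfolding eig_D_def by (rule left_eigenvector_unit[OF c(2) unit])
  show "normal p v* M i p (foot p) = eig_M i p *\<^sub>R normal p" for i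
    unfolding eig_M_def by (rule left_eigenvector_unit[OF c(3) unit])
qed

lemma diffusion_bounded_on_compact:
  assumes C: "compact C" "C \<subseteq> \<Omega>"
  shows "\<exists>B. \<forall>p\<in>C. norm (diffusion p) \<le> B"
  unfolding diffusion_def
proof (intro bounded_sum_on bounded_scaleR_on)
  show "\<exists>B. \<forall>p\<in>C. \<bar>a i j p\<bar> \<le> B" for i j
    using locally_bounded_on_compact[OF a_bdd C] by simp
  show "\<exists>B. \<forall>p\<in>C. norm (uxx i j p) \<le> B" for i j
    by (rule continuous_on_compact_bound[OF uxx_cont C])
qed

lemma rhs_lipschitz_from_bounds:
  assumes LD: "\<forall>z w. norm (D p z - D p w) \<le> LD * dist z w"
    and LM: "\<forall>i z w. norm (M i p z - M i p w) \<le> LM * dist z w"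
    and L\<phi>: "\<forall>z w. norm (\<phi> p z - \<phi> p w) \<le> L\<phi> * dist z w"
    and BA: "norm (diffusion p) \<le> BA" and BX: "\<forall>i. norm (ux i p) \<le> BX"
  defines "cK \<equiv> real CARD('k) * real CARD('k)"
  shows "(cK * max 0 LD * max 0 BA + real CARD('n) * (cK * max 0 LM * max 0 BX) + max 0 L\<phi>)-lipschitz_on
      UNIV (rhs p)"
proof (rule lipschitz_onI)
  show "0 \<le> cK * max 0 LD * max 0 BA + real CARD('n) * (cK * max 0 LM * max 0 BX) + max 0 L\<phi>"
    by (simp add: cK_def)
  fix z w
  let ?X = "D p z *v diffusion p - D p w *v diffusion p"
  let ?Y = "\<lambda>i. M i p z *v ux i p - M i p w *v ux i p"
  have regroup: "(x + y + v) - (x' + y' + v') = (x - x') + (y - y') + (v - v')"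
    for x y v x' y' v' :: "real^'k" by (simp add: algebra_simps)
  have "rhs p z - rhs p w = ?X + (\<Sum>i\<in>UNIV. ?Y i) + (\<phi> p z - \<phi> p w)"
    by (simp only: rhs_def regroup sum_subtractf)
  then have "dist (rhs p z) (rhs p w) \<le> norm ?X + norm (\<Sum>i\<in>UNIV. ?Y i) + norm (\<phi> p z - \<phi> p w)"
    unfolding dist_norm by (simp only: order_trans[OF norm_triangle_ineq add_right_mono[OF norm_triangle_ineq]])
  also have "\<dots> \<le> norm ?X + (\<Sum>i\<in>UNIV. norm (?Y i)) + norm (\<phi> p z - \<phi> p w)"
    by (simp add: norm_sum)
  also have "\<dots> \<le> cK * max 0 LD * max 0 BA * dist z w
      + (\<Sum>i::'n\<in>UNIV. cK * max 0 LM * max 0 BX * dist z w) + max 0 L\<phi> * dist z w"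
  proof (intro add_mono sum_mono)
    show "norm ?X \<le> cK * max 0 LD * max 0 BA * dist z w"
      unfolding cK_def using LD BA by (intro lipschitz_matrix_term) auto
    show "norm (?Y i) \<le> cK * max 0 LM * max 0 BX * dist z w" for i
      unfolding cK_def using LM BX by (intro lipschitz_matrix_term) auto
    have "norm (\<phi> p z - \<phi> p w) \<le> L\<phi> * dist z w" using L\<phi> by blast
    also have "\<dots> \<le> max 0 L\<phi> * dist z w" by (rule mult_right_mono) auto
    finally show "norm (\<phi> p z - \<phi> p w) \<le> max 0 L\<phi> * dist z w" .
  qed
  also have "\<dots> = (cK * max 0 LD * max 0 BA + real CARD('n) * (cK * max 0 LM * max 0 BX) + max 0 L\<phi>)
      * dist z w"
    by (simp add: algebra_simps)
  finally show "dist (rhs p z) (rhs p w)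
      \<le> (cK * max 0 LD * max 0 BA + real CARD('n) * (cK * max 0 LM * max 0 BX) + max 0 L\<phi>) * dist z w" .
qed

lemma rhs_lipschitz_on_compact:
  assumes C: "compact C" "C \<subseteq> \<Omega>"
  shows "\<exists>L. \<forall>p\<in>C. L-lipschitz_on UNIV (rhs p)"
proof -
  obtain LD where LD: "\<forall>p\<in>C. \<forall>z w. norm (D p z - D p w) \<le> LD * dist z w"
    using lip_D C unfolding lipschitz_z_on_def by blast
  obtain LM where LM: "\<forall>i. \<forall>p\<in>C. \<forall>z w. norm (M i p z - M i p w) \<le> LM * dist z w"
    using uniform_lipschitz_family[of C M] lip_M C unfolding lipschitz_z_on_def by blast
  obtain L\<phi> where L\<phi>: "\<forall>p\<in>C. \<forall>z w. norm (\<phi> p z - \<phi> p w) \<le> L\<phi> * dist z w"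
    using lip_\<phi> C unfolding lipschitz_z_on_def by blast
  obtain BA where BA: "\<forall>p\<in>C. norm (diffusion p) \<le> BA"
    using diffusion_bounded_on_compact[OF C] by blast
  have "\<exists>B. \<forall>i. \<forall>p\<in>C. norm (ux i p) \<le> B"
    by (rule finite_family_bound) (use continuous_on_compact_bound[OF ux_cont C] in auto)
  then obtain BX where BX: "\<forall>i. \<forall>p\<in>C. norm (ux i p) \<le> BX" by blast
  show ?thesis
    using rhs_lipschitz_from_bounds[of _ LD LM L\<phi> BA BX] LD LM L\<phi> BA BX by blast
qed

definition reaction_coeff :: "(real^'n) \<times> real \<Rightarrow> real" where
  "reaction_coeff p = lipschitz_const (rhs p)"

lemma reaction_coeff_lipschitz: "p \<in> \<Omega> \<Longrightarrow> (reaction_coeff p)-lipschitz_on UNIV (rhs p)"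
  using rhs_lipschitz_on_compact[of "{p}"] lipschitz_const(1) by (auto simp: reaction_coeff_def)

lemma reaction_coeff_bounded_on_compact:
  assumes C: "compact C" "C \<subseteq> \<Omega>"
  shows "\<exists>B. \<forall>p\<in>C. norm (reaction_coeff p) \<le> B"
proof -
  obtain L where L: "\<forall>p\<in>C. L-lipschitz_on UNIV (rhs p)" using rhs_lipschitz_on_compact[OF C] by blast
  have "norm (reaction_coeff p) \<le> L" if "p \<in> C" for p
  proof -
    have Lp: "L-lipschitz_on UNIV (rhs p)" using L that by blast
    have "0 \<le> reaction_coeff p"
      using lipschitz_on_nonneg[OF lipschitz_const(1)[OF Lp]] by (simp add: reaction_coeff_def)
    moreover have "reaction_coeff p \<le> L" using lipschitz_const(2)[OF Lp] by (simp add: reaction_coeff_def)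
    ultimately show ?thesis by simp
  qed
  then show ?thesis by blast
qed

text \<open>Over a compact set the foot points stay bounded, since |u p - foot p| is at most the distance
  to any fixed frontier point; so (p, foot p) ranges in a compact subset of \<Omega> \<times> UNIV.\<close>

lemma foot_graph_compact:
  assumes C: "compact C" "C \<subseteq> \<Omega>"
  obtains G where "compact G" "G \<subseteq> \<Omega> \<times> UNIV" "\<And>p. p \<in> C \<Longrightarrow> (p, foot p) \<in> G"
proof (cases "C = {}")
  case True
  then show ?thesis using that[of "{}"] by simp
next
  case False
  then obtain p0 where "p0 \<in> C" by blast
  then have "frontier K \<noteq> {}"
    using frontier_not_empty[of K] K_proper u_in_K C(2) by blast
  then obtain f0 where f0: "f0 \<in> frontier K" by blast
  obtain Bu where Bu: "\<forall>p\<in>C. norm (u p) \<le> Bu" using continuous_on_compact_bound[OF u_cont C] by blast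
  define R where "R = 2 * Bu + norm f0"
  have bound: "norm (foot p) \<le> R" if p: "p \<in> C" for p
  proof -
    have "dist (u p) (foot p) = dist_bd K (u p)" using p C(2) dist_foot by blast
    also have "\<dots> \<le> dist (u p) f0" unfolding dist_bd_def by (rule infdist_le[OF f0])
    finally have "norm (u p - foot p) \<le> norm (u p) + norm f0"
      by (metis dist_norm norm_triangle_ineq4 order_trans)
    moreover have "norm (u p) \<le> Bu" using Bu p by blast
    moreover have "norm (foot p) \<le> norm (u p) + norm (u p - foot p)"
      using norm_triangle_ineq4[of "u p" "u p - foot p"] by simp
    ultimately show ?thesis by (simp add: R_def)
  qed
  show ?thesis
  proof (rule that)
    show "compact (C \<times> cball (0::real^'k) R)" using C(1) compact_cball by (rule compact_Times)
    show "C \<times> cball (0::real^'k) R \<subseteq> \<Omega> \<times> UNIV" using C(2) by auto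
    show "(p, foot p) \<in> C \<times> cball (0::real^'k) R" if "p \<in> C" for p using bound that by simp
  qed
qed

lemma eigenvalues_bounded_on_compact:
  assumes C: "compact C" "C \<subseteq> \<Omega>"
  shows "\<exists>B. \<forall>p\<in>C. \<bar>eig_D p\<bar> \<le> B \<and> (\<forall>i. \<bar>eig_M i p\<bar> \<le> B)"
proof -
  obtain G where G: "compact G" "G \<subseteq> \<Omega> \<times> UNIV" "\<And>p. p \<in> C \<Longrightarrow> (p, foot p) \<in> G"
    using foot_graph_compact[OF C] by blast
  obtain BD where BD: "\<forall>x\<in>G. norm ((\<lambda>(p, z). D p z) x) \<le> BD"
    using locally_bounded_on_compact[OF D_bdd G(1,2)] by blast
  obtain BM where BM: "\<forall>i. \<forall>x\<in>G. norm ((\<lambda>(p, z). M i p z) x) \<le> BM"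
    using finite_family_bound[where P="\<lambda>i B. \<forall>x\<in>G. norm ((\<lambda>(p, z). M i p z) x) \<le> B"]
      locally_bounded_on_compact[OF M_bdd G(1,2)] by force
  define cK where "cK = real CARD('k) * real CARD('k)"
  have "\<bar>eig_D p\<bar> \<le> cK * max BD BM \<and> (\<forall>i. \<bar>eig_M i p\<bar> \<le> cK * max BD BM)" if p: "p \<in> C" for p
  proof -
    have unit: "norm (normal p) = 1" using p C(2) normal_unit by blast
    have "norm (D p (foot p)) \<le> BD" using bspec[OF BD G(3)[OF p]] by simp
    moreover have "norm (M i p (foot p)) \<le> BM" for i
    proof -
      have "\<forall>x\<in>G. norm ((\<lambda>(p, z). M i p z) x) \<le> BM" using BM by blast
      from bspec[OF this G(3)[OF p]] show ?thesis by simp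
    qed
    ultimately have "norm (D p (foot p)) \<le> max BD BM" "\<And>i. norm (M i p (foot p)) \<le> max BD BM"
      by (auto simp: le_max_iff_disj)
    then show ?thesis
      using unit_quadratic_form_bound[OF unit, of "D p (foot p)"]
        unit_quadratic_form_bound[OF unit, of "M _ p (foot p)"]
      unfolding eig_D_def eig_M_def cK_def
      by (meson mult_left_mono of_nat_0_le_iff mult_nonneg_nonneg order_trans)
  qed
  then show ?thesis by blast
qed

lemma eig_D_lower_bound_on_compact:
  assumes C: "compact C" "C \<subseteq> \<Omega>"
  shows "\<exists>c>0. \<forall>p\<in>C. c \<le> eig_D p"
proof -
  obtain G where G: "compact G" "G \<subseteq> \<Omega> \<times> UNIV" "\<And>p. p \<in> C \<Longrightarrow> (p, foot p) \<in> G"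
    using foot_graph_compact[OF C] by blast
  obtain c where c: "c > 0" "\<forall>x\<in>G. \<forall>\<xi>. c * (norm \<xi>)\<^sup>2 \<le> \<xi> \<bullet> ((\<lambda>(p, z). D p z) x *v \<xi>)"
    using loc_unif_pos_compact[OF D_pos G(1,2)] by blast
  have "c \<le> eig_D p" if p: "p \<in> C" for p
  proof -
    have "c * (norm (normal p))\<^sup>2 \<le> normal p \<bullet> (D p (foot p) *v normal p)"
      using bspec[OF c(2) G(3)[OF p]] by simp
    moreover have "norm (normal p) = 1" using p C(2) normal_unit by blast
    ultimately show ?thesis by (simp add: eig_D_def)
  qed
  then show ?thesis using c(1) by blast
qed

lemma eig_D_nonneg: "p \<in> \<Omega> \<Longrightarrow> 0 \<le> eig_D p"
  using eig_D_lower_bound_on_compact[of "{p}"] by force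

lemma ellipticity_psd: "p \<in> \<Omega> \<Longrightarrow> quad_form (\<lambda>i j. a i j p) \<xi> \<ge> 0"
proof -
  assume "p \<in> \<Omega>"
  then obtain c where "c > 0" "\<forall>\<zeta>. c * (norm \<zeta>)\<^sup>2 \<le> \<zeta> \<bullet> ((\<chi> i j. a i j p) *v \<zeta>)"
    using loc_unif_pos_compact[OF a_pos, of "{p}"] by auto
  then have "0 \<le> (\<chi> i. \<xi> i) \<bullet> ((\<chi> i j. a i j p) *v (\<chi> i. \<xi> i))"
    by (meson order_trans mult_nonneg_nonneg less_imp_le zero_le_power2)
  then show ?thesis by (simp add: quadratic_form_cart)
qed

lemma test_difference_partials_continuous:
  assumes "C_inf_on \<Omega> \<psi>"
  shows "continuous_on \<Omega> (\<lambda>q. \<nu> \<bullet> ux i q - pd (e_x i) \<psi> q)"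
    and "continuous_on \<Omega> (\<lambda>q. \<nu> \<bullet> uxx i j q - iter_pd [e_x j, e_x i] \<psi> q)"
proof -
  have cont: "continuous_on \<Omega> (iter_pd vs \<psi>)" for vs using assms unfolding C_inf_on_def by blast
  show "continuous_on \<Omega> (\<lambda>q. \<nu> \<bullet> ux i q - pd (e_x i) \<psi> q)"
    using cont[of "[e_x i]"] ux_cont by (auto intro!: continuous_intros)
  show "continuous_on \<Omega> (\<lambda>q. \<nu> \<bullet> uxx i j q - iter_pd [e_x j, e_x i] \<psi> q)"
    using cont[of "[e_x j, e_x i]"] uxx_cont by (auto intro!: continuous_intros)
qed

text \<open>If \<psi> touches d(u) from below at p0, then \<nu> \<bullet> u - \<psi> has a local minimum at p0, because
  \<nu> \<bullet> (u - foot p0) dominates d(u) and agrees with it at p0.\<close>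

definition contact_gap :: "((real^'n) \<times> real \<Rightarrow> real) \<Rightarrow> (real^'n) \<times> real \<Rightarrow> (real^'n) \<times> real \<Rightarrow> real" where
  "contact_gap \<psi> p0 q = normal p0 \<bullet> u q - \<psi> q"

lemma contact_gap_minimum:
  assumes p0: "p0 \<in> \<Omega>" and touch: "\<psi> p0 = dist_bd K (u p0)"
    and below: "\<forall>q\<in>\<Omega> \<inter> ball p0 e. \<psi> q \<le> dist_bd K (u q)" and q: "q \<in> \<Omega> \<inter> ball p0 e"
  shows "contact_gap \<psi> p0 p0 \<le> contact_gap \<psi> p0 q"
proof -
  have supp: "distance_support K (u p0) (foot p0) (normal p0)" by (rule distance_support_at[OF p0])
  have "\<psi> q \<le> dist_bd K (u q)" using below q by blast
  also have "\<dots> \<le> normal p0 \<bullet> (u q - foot p0)" using supp u_in_K q by (simp add: distance_support_def)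
  finally show ?thesis using supp touch by (simp add: contact_gap_def distance_support_def inner_diff_right)
qed

lemma contact_first_order:
  assumes p0: "p0 \<in> \<Omega>" and \<psi>: "C_inf_on \<Omega> \<psi>" and touch: "\<psi> p0 = dist_bd K (u p0)"
    and e: "e > 0" and below: "\<forall>q\<in>\<Omega> \<inter> ball p0 e. \<psi> q \<le> dist_bd K (u q)"
  shows "normal p0 \<bullet> ut p0 = pd e_t \<psi> p0" and "\<And>i. normal p0 \<bullet> ux i p0 = pd (e_x i) \<psi> p0"
proof -
  have S: "open (\<Omega> \<inter> ball p0 e)" "p0 \<in> \<Omega> \<inter> ball p0 e" using open_\<Omega> p0 e by auto
  note min = contact_gap_minimum[OF p0 touch below]
  have dgap: "((\<lambda>h. contact_gap \<psi> p0 (p0 + h *\<^sub>R d)) has_vector_derivative normal p0 \<bullet> U - pd d \<psi> p0) (at 0)"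
    if "((\<lambda>h. u (p0 + h *\<^sub>R d)) has_vector_derivative U) (at 0)" for d U
    using test_difference_derivative[OF \<psi> p0 that, where vs="[]"] by (simp add: contact_gap_def)
  show "normal p0 \<bullet> ut p0 = pd e_t \<psi> p0"
    using local_min_directional_derivative[OF S min dgap[OF u_dt[OF p0]]] by simp
  show "normal p0 \<bullet> ux i p0 = pd (e_x i) \<psi> p0" for i
    using local_min_directional_derivative[OF S min dgap[OF u_dx[OF p0]]] by simp
qed

text \<open>Second-order contact condition: the spatial Hessian of \<nu> \<bullet> u - \<psi> is positive
  semidefinite at p0, hence its Frobenius product with (a_ij) is nonnegative.\<close>

lemma contact_second_order:
  assumes p0: "p0 \<in> \<Omega>" and \<psi>: "C_inf_on \<Omega> \<psi>" and touch: "\<psi> p0 = dist_bd K (u p0)"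
    and e: "e > 0" and below: "\<forall>q\<in>\<Omega> \<inter> ball p0 e. \<psi> q \<le> dist_bd K (u q)"
  shows "(\<Sum>i\<in>UNIV. \<Sum>j\<in>UNIV. a i j p0 * iter_pd [e_x j, e_x i] \<psi> p0) \<le> normal p0 \<bullet> diffusion p0"
proof -
  define S where "S = \<Omega> \<inter> ball p0 e"
  have S: "open S" "p0 \<in> S" "S \<subseteq> \<Omega>" using open_\<Omega> p0 e by (auto simp: S_def)
  define W1 where "W1 i q = normal p0 \<bullet> ux i q - pd (e_x i) \<psi> q" for i q
  define W2 where "W2 i j q = normal p0 \<bullet> uxx i j q - iter_pd [e_x j, e_x i] \<psi> q" for i j q
  have dgap: "((\<lambda>h. contact_gap \<psi> p0 (q + h *\<^sub>R e_x i)) has_vector_derivative W1 i q) (at 0)"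
    if "q \<in> S" for q i
  proof -
    have q: "q \<in> \<Omega>" using that S(3) by blast
    from test_difference_derivative[OF \<psi> q u_dx[OF q], where vs="[]" and \<nu>="normal p0"]
    show ?thesis by (simp add: contact_gap_def W1_def)
  qed
  have dW1: "((\<lambda>h. W1 i (q + h *\<^sub>R e_x j)) has_vector_derivative W2 i j q) (at 0)" if "q \<in> S" for q i j
  proof -
    have q: "q \<in> \<Omega>" using that S(3) by blast
    from test_difference_derivative[OF \<psi> q u_dxx[OF q], where vs="[e_x i]" and \<nu>="normal p0"]
    show ?thesis by (simp add: W1_def W2_def)
  qed
  have W1_cont: "continuous_on S (W1 i)" and W2_cont: "continuous_on S (W2 i j)" for i j
    using test_difference_partials_continuous[OF \<psi>] continuous_on_subset[OF _ S(3)]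
    unfolding W1_def W2_def by blast+
  have "quad_form (\<lambda>i j. W2 i j p0) \<xi> \<ge> 0" for \<xi>
    using local_min_x_hessian_psd[OF S(1,2) contact_gap_minimum[OF p0 touch below] dgap W1_cont dW1 W2_cont,
        of "\<chi> i. \<xi> i"]
    by (simp add: quad_form_def S_def)
  then have "0 \<le> (\<Sum>i\<in>UNIV. \<Sum>j\<in>UNIV. a i j p0 * W2 i j p0)"
    using frobenius_product_psd_nonneg[of "\<lambda>i j. a i j p0"] a_sym[OF p0] ellipticity_psd[OF p0] by blast
  moreover have "normal p0 \<bullet> diffusion p0 = (\<Sum>i\<in>UNIV. \<Sum>j\<in>UNIV. a i j p0 * W2 i j p0)
      + (\<Sum>i\<in>UNIV. \<Sum>j\<in>UNIV. a i j p0 * iter_pd [e_x j, e_x i] \<psi> p0)"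
    by (simp add: diffusion_def W2_def inner_sum_right right_diff_distrib sum_subtractf)
  ultimately show ?thesis by simp
qed

definition diffusion_coeff :: "'n \<Rightarrow> 'n \<Rightarrow> (real^'n) \<times> real \<Rightarrow> real" where
  "diffusion_coeff i j p = eig_D p * a i j p"

definition drift_coeff :: "'n \<Rightarrow> (real^'n) \<times> real \<Rightarrow> real" where
  "drift_coeff i p = eig_M i p"

text \<open>The supersolution inequality at a touching point: substitute the system into \<psi>_t, evaluate
  the coefficients at the foot point with an error of at most \<gamma> \<psi>(p0), and use the eigenvector
  relations, \<lambda> \<ge> 0, \<phi> \<bullet> \<nu> \<ge> 0 and the contact conditions.\<close>

lemma supersolution_at:
  assumes p0: "p0 \<in> \<Omega>" and \<psi>: "C_inf_on \<Omega> \<psi>" and touch: "\<psi> p0 = dist_bd K (u p0)"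
    and e: "e > 0" and below: "\<forall>q\<in>\<Omega> \<inter> ball p0 e. \<psi> q \<le> dist_bd K (u q)"
  shows "pd e_t \<psi> p0 - (\<Sum>i\<in>UNIV. \<Sum>j\<in>UNIV. diffusion_coeff i j p0 * iter_pd [e_x i, e_x j] \<psi> p0)
          - (\<Sum>i\<in>UNIV. drift_coeff i p0 * pd (e_x i) \<psi> p0) + reaction_coeff p0 * \<psi> p0 \<ge> 0"
proof -
  define \<nu> v where "\<nu> = normal p0" and "v = foot p0"
  note first = contact_first_order[OF assms, folded \<nu>_def]
  note second = contact_second_order[OF assms, folded \<nu>_def]
  note eig = compatibility_at_foot[OF p0, folded \<nu>_def v_def]
  have unit: "norm \<nu> = 1" using normal_unit[OF p0] by (simp add: \<nu>_def)
  have "\<bar>\<nu> \<bullet> (rhs p0 (u p0) - rhs p0 v)\<bar> \<le> norm (rhs p0 (u p0) - rhs p0 v)"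
    using Cauchy_Schwarz_ineq2[of \<nu>] unit by simp
  also have "\<dots> \<le> reaction_coeff p0 * dist (u p0) v"
    using lipschitz_onD[OF reaction_coeff_lipschitz[OF p0]] by (simp add: dist_norm)
  also have "\<dots> = reaction_coeff p0 * \<psi> p0" using dist_foot[OF p0] touch by (simp add: v_def)
  finally have lip: "\<nu> \<bullet> rhs p0 (u p0) \<ge> \<nu> \<bullet> rhs p0 v - reaction_coeff p0 * \<psi> p0"
    by (simp add: inner_diff_right)
  have "\<nu> \<bullet> rhs p0 v = eig_D p0 * (\<nu> \<bullet> diffusion p0) + (\<Sum>i\<in>UNIV. eig_M i p0 * (\<nu> \<bullet> ux i p0)) + \<nu> \<bullet> \<phi> p0 v"
    using eig(2,3) by (simp add: rhs_def inner_add_right inner_sum_right dot_lmul_matrix[symmetric])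
  also have "\<nu> \<bullet> \<phi> p0 v \<ge> 0" using eig(1) by (simp add: inner_commute)
  moreover have "eig_D p0 * (\<nu> \<bullet> diffusion p0)
      \<ge> (\<Sum>i\<in>UNIV. \<Sum>j\<in>UNIV. diffusion_coeff i j p0 * iter_pd [e_x i, e_x j] \<psi> p0)"
  proof -
    have "(\<Sum>i\<in>UNIV. \<Sum>j\<in>UNIV. diffusion_coeff i j p0 * iter_pd [e_x i, e_x j] \<psi> p0)
        = eig_D p0 * (\<Sum>j\<in>UNIV. \<Sum>i\<in>UNIV. a j i p0 * iter_pd [e_x i, e_x j] \<psi> p0)"
      by (subst sum.swap) (simp add: diffusion_coeff_def a_sym[OF p0] sum_distrib_left mult.assoc)
    also have "\<dots> \<le> eig_D p0 * (\<nu> \<bullet> diffusion p0)"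
      using second eig_D_nonneg[OF p0] by (simp add: mult_left_mono)
    finally show ?thesis .
  qed
  ultimately have "\<nu> \<bullet> rhs p0 v \<ge> (\<Sum>i\<in>UNIV. \<Sum>j\<in>UNIV. diffusion_coeff i j p0 * iter_pd [e_x i, e_x j] \<psi> p0)
      + (\<Sum>i\<in>UNIV. drift_coeff i p0 * pd (e_x i) \<psi> p0)"
    using first(2) by (simp add: drift_coeff_def)
  moreover have "pd e_t \<psi> p0 = \<nu> \<bullet> rhs p0 (u p0)" using first(1) ut_eq_rhs[OF p0] by simp
  ultimately show ?thesis using lip by linarith
qed

lemma diffusion_coeff_locally_bounded: "locally_bounded_on \<Omega> (diffusion_coeff i j)"
proof (rule locally_bounded_onI_compact[OF open_\<Omega>])
  fix C assume C: "compact C" "C \<subseteq> \<Omega>"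
  have "\<exists>B. \<forall>p\<in>C. \<bar>eig_D p\<bar> \<le> B" using eigenvalues_bounded_on_compact[OF C] by blast
  moreover have "\<exists>B. \<forall>p\<in>C. norm (a i j p) \<le> B" by (rule locally_bounded_on_compact[OF a_bdd C])
  ultimately obtain B where "\<forall>p\<in>C. norm (eig_D p *\<^sub>R a i j p) \<le> B" using bounded_scaleR_on by blast
  then show "\<exists>B. \<forall>p\<in>C. norm (diffusion_coeff i j p) \<le> B" by (auto simp: diffusion_coeff_def)
qed

lemma drift_coeff_locally_bounded: "locally_bounded_on \<Omega> (drift_coeff i)"
proof (rule locally_bounded_onI_compact[OF open_\<Omega>])
  fix C assume C: "compact C" "C \<subseteq> \<Omega>"
  then show "\<exists>B. \<forall>p\<in>C. norm (drift_coeff i p) \<le> B"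
    using eigenvalues_bounded_on_compact[OF C] by (auto simp: drift_coeff_def)
qed

lemma reaction_coeff_locally_bounded: "locally_bounded_on \<Omega> reaction_coeff"
  using locally_bounded_onI_compact[OF open_\<Omega>] reaction_coeff_bounded_on_compact by blast

lemma reaction_coeff_nonneg: "p \<in> \<Omega> \<Longrightarrow> 0 \<le> reaction_coeff p"
  using lipschitz_on_nonneg[OF reaction_coeff_lipschitz] .

lemma diffusion_coeff_loc_unif_pos: "loc_unif_pos_def \<Omega> (\<lambda>p. \<chi> i j. diffusion_coeff i j p)"
proof (rule loc_unif_pos_defI_compact[OF open_\<Omega>])
  fix C assume C: "compact C" "C \<subseteq> \<Omega>"
  obtain c1 where c1: "c1 > 0" "\<forall>p\<in>C. c1 \<le> eig_D p"
    using eig_D_lower_bound_on_compact[OF C] by blast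
  obtain c2 where c2: "c2 > 0" "\<forall>p\<in>C. \<forall>\<xi>. c2 * (norm \<xi>)\<^sup>2 \<le> \<xi> \<bullet> ((\<chi> i j. a i j p) *v \<xi>)"
    using loc_unif_pos_compact[OF a_pos C] by blast
  have "c1 * c2 * (norm \<xi>)\<^sup>2 \<le> \<xi> \<bullet> ((\<chi> i j. diffusion_coeff i j p) *v \<xi>)" if p: "p \<in> C" for p \<xi>
  proof -
    have "(\<chi> i j. diffusion_coeff i j p) *v \<xi> = eig_D p *\<^sub>R ((\<chi> i j. a i j p) *v \<xi>)"
      by (simp add: vec_eq_iff matrix_vector_mult_def diffusion_coeff_def sum_distrib_left mult.assoc)
    moreover have "c1 * (c2 * (norm \<xi>)\<^sup>2) \<le> eig_D p * (\<xi> \<bullet> ((\<chi> i j. a i j p) *v \<xi>))"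
      using c1 c2 p by (intro mult_mono) auto
    ultimately show ?thesis by (simp add: mult.assoc)
  qed
  then show "\<exists>c>0. \<forall>p\<in>C. \<forall>\<xi>. c * (norm \<xi>)\<^sup>2 \<le> \<xi> \<bullet> ((\<chi> i j. diffusion_coeff i j p) *v \<xi>)"
    using c1(1) c2(1) by (intro exI[of _ "c1 * c2"]) auto
qed

end

theorem theorem2:
  fixes X :: "(real^'n::finite) set"
    and \<Omega> :: "((real^'n) \<times> real) set"
    and u :: "(real^'n) \<times> real \<Rightarrow> real^'k::finite"
    and a :: "'n \<Rightarrow> 'n \<Rightarrow> (real^'n) \<times> real \<Rightarrow> real"
    and D :: "(real^'n) \<times> real \<Rightarrow> real^'k \<Rightarrow> real^'k^'k"
    and M :: "'n \<Rightarrow> (real^'n) \<times> real \<Rightarrow> real^'k \<Rightarrow> real^'k^'k"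
    and \<phi> :: "(real^'n) \<times> real \<Rightarrow> real^'k \<Rightarrow> real^'k"
    and K :: "(real^'k) set"
  assumes X_open: "open X" and X_conn: "connected X"
    and \<Omega>_def: "\<Omega> = X \<times> {0<..}"
    and u_reg: "\<exists>ut ux uxx. C21_on \<Omega> u ut ux uxx \<and>
        (\<forall>p\<in>\<Omega>. ut p = D p (u p) *v (\<Sum>i\<in>UNIV. \<Sum>j\<in>UNIV. a i j p *\<^sub>R uxx i j p)
                        + (\<Sum>i\<in>UNIV. M i p (u p) *v ux i p) + \<phi> p (u p))"
    and u_cont: "continuous_on (closure \<Omega>) u"
    and lip_\<phi>: "lipschitz_z_on \<Omega> \<phi>"
    and lip_D: "lipschitz_z_on \<Omega> D"
    and lip_M: "\<forall>i. lipschitz_z_on \<Omega> (M i)"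
    and a_bdd: "\<forall>i j. locally_bounded_on \<Omega> (a i j)"
    and D_bdd: "locally_bounded_on (\<Omega> \<times> UNIV) (\<lambda>(p, z). D p z)"
    and M_bdd: "\<forall>i. locally_bounded_on (\<Omega> \<times> UNIV) (\<lambda>(p, z). M i p z)"
    and a_sym: "\<forall>p\<in>\<Omega>. \<forall>i j. a i j p = a j i p"
    and a_pos: "loc_unif_pos_def \<Omega> (\<lambda>p. \<chi> i j. a i j p)"
    and D_pos: "loc_unif_pos_def (\<Omega> \<times> UNIV) (\<lambda>(p, z). D p z)"
    and K_closed: "closed K" and K_convex: "convex K" and K_ne: "K \<noteq> UNIV"
    and compat: "\<forall>p\<in>\<Omega>. \<forall>v\<in>frontier K. \<forall>\<nu>. inward_pointing K v \<nu> \<longrightarrow>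
        \<phi> p v \<bullet> \<nu> \<ge> 0 \<and> left_eigenvector \<nu> (D p v) \<and> (\<forall>i. left_eigenvector \<nu> (M i p v))"
    and u_in_K: "\<forall>p\<in>\<Omega>. u p \<in> K"
  shows "\<exists>\<alpha> \<beta> \<gamma>.
     (\<forall>i j. locally_bounded_on \<Omega> (\<alpha> i j)) \<and> (\<forall>i. locally_bounded_on \<Omega> (\<beta> i)) \<and>
     locally_bounded_on \<Omega> \<gamma> \<and> (\<forall>p\<in>\<Omega>. \<gamma> p \<ge> 0) \<and>
     loc_unif_pos_def \<Omega> (\<lambda>p. \<chi> i j. \<alpha> i j p) \<and>
     (\<forall>p0\<in>\<Omega>. \<forall>\<psi>. C_inf_on \<Omega> \<psi> \<and> \<psi> p0 = dist_bd K (u p0) \<and>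
        (\<exists>e>0. \<forall>q\<in>\<Omega> \<inter> ball p0 e. \<psi> q \<le> dist_bd K (u q)) \<longrightarrow>
        pd e_t \<psi> p0 - (\<Sum>i\<in>UNIV. \<Sum>j\<in>UNIV. \<alpha> i j p0 * iter_pd [e_x i, e_x j] \<psi> p0)
          - (\<Sum>i\<in>UNIV. \<beta> i p0 * pd (e_x i) \<psi> p0) + \<gamma> p0 * \<psi> p0 \<ge> 0)"
proof -
  obtain ut ux uxx where reg: "C21_on \<Omega> u ut ux uxx"
    and eq: "\<forall>p\<in>\<Omega>. ut p = D p (u p) *v (\<Sum>i\<in>UNIV. \<Sum>j\<in>UNIV. a i j p *\<^sub>R uxx i j p)
                        + (\<Sum>i\<in>UNIV. M i p (u p) *v ux i p) + \<phi> p (u p)"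
    using u_reg by blast
  have "open \<Omega>" using X_open by (simp add: \<Omega>_def open_Times)
  then interpret diffusion_in_convex_set \<Omega> u ut ux uxx a D M \<phi> K
    using reg eq lip_\<phi> lip_D lip_M a_bdd D_bdd M_bdd a_sym a_pos D_pos K_closed K_convex K_ne
      compat u_in_K
    by unfold_locales blast+
  show ?thesis
    using diffusion_coeff_locally_bounded drift_coeff_locally_bounded reaction_coeff_locally_bounded
      reaction_coeff_nonneg diffusion_coeff_loc_unif_pos supersolution_at
    by (intro exI[of _ diffusion_coeff] exI[of _ drift_coeff] exI[of _ reaction_coeff]) blast
qed

end
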